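(* Fix $N\geq2$ and let $R_m^G$ and $R_m^D$ be the effective resistances of the graphs $G_m$ and $D_m$ described in the context. Then for all $m\geq 1$, $R_m^G=2R_m^D$.
   Context: Let $N\geq2$, $\Lambda=\{0,\dots,4N-1\}$, indices modulo $4N$, $C_j=\exp\frac{(2j-1)i\pi}{4N}$, $F_0$ the convex hull of the $C_j$, $r=(1+\cot(\pi/4N))^{-1}$, $\phi_j(x)=r(x-C_j)+C_j$, $\Phi(A)=\bigcup_j\phi_j(A)$, $F_m=\Phi^m(F_0)$. Let $L_j$ be the segment from $C_j$ to $C_{j+1}$, $A_m=F_m\cap\bigcup_{k=0}^{N-1}L_{4k}$, $B_m=F_m\cap\bigcup_{k=0}^{N-1}L_{4k+2}$. Let $\theta(z)=ze^{i\pi/2N}$. Define $\psi_j(z)=\phi_j\circ\theta^j(z)$ if $j$ is even and $\psi_j(z)=\phi_j\circ\theta^{j-1}(\bar z)$ if $j$ is odd. If $N$ is even let $\tilde\psi_{3N-1}(z)=\phi_{3N-1}\circ\theta^{3N-1}(z)$, $\tilde\psi_{3N}(z)=\phi_{3N}\circ\theta^{3N-1}(\bar z)$, and $\tilde\psi_j=\psi_j$ for other $j$; if $N$ is odd let $\tilde\psi_N(z)=\phi_N\circ\theta^N(z)$, $\tilde\psi_{N+1}(z)=\phi_{N+1}\circ\theta^N(\bar z)$, and $\tilde\psi_j=\psi_j$ for other $j$. For a word $w=w_1\cdots w_m\in\Lambda^m$ set $\psi_w=\psi_{w_1}\circ\tilde\psi_{w_2}\circ\cdots\circ\tilde\psi_{w_m}$.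 The graph $G_0$ has vertices $0$ and the midpoints $\frac12(C_j+C_{j+1})$ for $j=0,N,3N-1$, with one edge from $0$ to each of the other three vertices. The graph $D_0$ has vertices $0,C_0,C_1,C_N,C_{N+1},C_{3N-1},C_{3N}$ with one edge from $0$ to each of the other six. For $m\ge1$, $G_m$ (resp. $D_m$) is the graph whose vertex set is the union over $|w|=m$ of the images under $\psi_w$ of the vertices of $G_0$ (resp. $D_0$), coincident points being identified, and whose edges are the images under $\psi_w$ of the edges of $G_0$ (resp. $D_0$). Each edge has conductance $1$. For a graph $H$ among these, its effective resistance $R$ is defined by $R^{-1}=\inf\{\sum_{\text{edges }\{x,y\}}(u(x)-u(y))^2: u=0 \text{ at vertices in } A_m,\ u=1\text{ at vertices in } B_m\}$; write $R_m^G$ for $H=G_m$ and $R_m^D$ for $H=D_m$. *)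

theory Defs
  imports "HOL-Analysis.Analysis"
begin

(* Vertices C_j of the regular 4N-gon; the formula is 4N-periodic in j. *)
definition vC :: "nat \<Rightarrow> nat \<Rightarrow> complex" where
  "vC N j = exp (\<i> * complex_of_real ((2 * real j - 1) * pi / (4 * real N)))"

definition Lam :: "nat \<Rightarrow> nat set" where
  "Lam N = {0..<4*N}"

definition F0 :: "nat \<Rightarrow> complex set" where
  "F0 N = convex hull (vC N ` Lam N)"

definition ratio :: "nat \<Rightarrow> real" where
  "ratio N = 1 / (1 + cot (pi / (4 * real N)))"

definition phi :: "nat \<Rightarrow> nat \<Rightarrow> complex \<Rightarrow> complex" where
  "phi N j x = complex_of_real (ratio N) * (x - vC N j) + vC N j"

definition Phi :: "nat \<Rightarrow> complex set \<Rightarrow> complex set" where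
  "Phi N A = (\<Union>j\<in>Lam N. phi N j ` A)"

definition Fm :: "nat \<Rightarrow> nat \<Rightarrow> complex set" where
  "Fm N m = (Phi N ^^ m) (F0 N)"

definition seg :: "nat \<Rightarrow> nat \<Rightarrow> complex set" where
  "seg N j = closed_segment (vC N j) (vC N (j + 1))"

definition Aset :: "nat \<Rightarrow> nat \<Rightarrow> complex set" where
  "Aset N m = Fm N m \<inter> (\<Union>k<N. seg N (4 * k))"

definition Bset :: "nat \<Rightarrow> nat \<Rightarrow> complex set" where
  "Bset N m = Fm N m \<inter> (\<Union>k<N. seg N (4 * k + 2))"

definition theta :: "nat \<Rightarrow> complex \<Rightarrow> complex" where
  "theta N z = z * exp (\<i> * complex_of_real (pi / (2 * real N)))"

definition psi :: "nat \<Rightarrow> nat \<Rightarrow> complex \<Rightarrow> complex" where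
  "psi N j z = (if even j then phi N j ((theta N ^^ j) z)
                else phi N j ((theta N ^^ (j - 1)) (cnj z)))"

definition psit :: "nat \<Rightarrow> nat \<Rightarrow> complex \<Rightarrow> complex" where
  "psit N j z =
    (if even N then
       (if j = 3 * N - 1 then phi N j ((theta N ^^ (3 * N - 1)) z)
        else if j = 3 * N then phi N j ((theta N ^^ (3 * N - 1)) (cnj z))
        else psi N j z)
     else
       (if j = N then phi N j ((theta N ^^ N) z)
        else if j = N + 1 then phi N j ((theta N ^^ N) (cnj z))
        else psi N j z))"

fun psitw :: "nat \<Rightarrow> nat list \<Rightarrow> complex \<Rightarrow> complex" where
  "psitw N [] = id"
| "psitw N (j # ws) = psit N j \<circ> psitw N ws"

fun psiw :: "nat \<Rightarrow> nat list \<Rightarrow> complex \<Rightarrow> complex" where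
  "psiw N [] = id"
| "psiw N (j # ws) = psi N j \<circ> psitw N ws"

definition words :: "nat \<Rightarrow> nat \<Rightarrow> nat list set" where
  "words N m = {w. length w = m \<and> set w \<subseteq> Lam N}"

definition VG0 :: "nat \<Rightarrow> complex set" where
  "VG0 N = insert 0 ((\<lambda>j. (vC N j + vC N (j + 1)) / 2) ` {0, N, 3 * N - 1})"

definition EG0 :: "nat \<Rightarrow> (complex \<times> complex) set" where
  "EG0 N = (\<lambda>j. (0, (vC N j + vC N (j + 1)) / 2)) ` {0, N, 3 * N - 1}"

definition VD0 :: "nat \<Rightarrow> complex set" where
  "VD0 N = insert 0 (vC N ` {0, 1, N, N + 1, 3 * N - 1, 3 * N})"

definition ED0 :: "nat \<Rightarrow> (complex \<times> complex) set" where
  "ED0 N = (\<lambda>j. (0, vC N j)) ` {0, 1, N, N + 1, 3 * N - 1, 3 * N}"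

(* level-m graph generated from (V0, E0): vertices are points of the plane
   (coincident points identified automatically); edges are the images of the
   edges of the initial graph under all psi_w, |w| = m, each with conductance 1 *)
definition Vm :: "nat \<Rightarrow> complex set \<Rightarrow> nat \<Rightarrow> complex set" where
  "Vm N V0 m = (\<Union>w\<in>words N m. psiw N w ` V0)"

definition Em :: "nat \<Rightarrow> (complex \<times> complex) set \<Rightarrow> nat \<Rightarrow> (complex \<times> complex) set" where
  "Em N E0 m = (\<lambda>(w, e). (psiw N w (fst e), psiw N w (snd e))) ` (words N m \<times> E0)"

definition energy :: "(complex \<times> complex) set \<Rightarrow> (complex \<Rightarrow> real) \<Rightarrow> real" where
  "energy E u = (\<Sum>(x, y)\<in>E. (u x - u y)\<^sup>2)"

definition eff_res :: "nat \<Rightarrow> complex set \<Rightarrow> (complex \<times> complex) set \<Rightarrow> nat \<Rightarrow> real" where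
  "eff_res N V0 E0 m = 1 / Inf {energy (Em N E0 m) u | u.
      (\<forall>x\<in>Vm N V0 m \<inter> Aset N m. u x = 0) \<and> (\<forall>x\<in>Vm N V0 m \<inter> Bset N m. u x = 1)}"

definition RG :: "nat \<Rightarrow> nat \<Rightarrow> real" where
  "RG N m = eff_res N (VG0 N) (EG0 N) m"

definition RD :: "nat \<Rightarrow> nat \<Rightarrow> real" where
  "RD N m = eff_res N (VD0 N) (ED0 N) m"

end

theory Submission
  imports Defs
begin

(* Every cell psi_w(F_0), |w| = m, is a similar copy of F_0. Call the images of the sides
   L_0, L_N, L_{3N-1} of F_0 the marked sides of the cell: the edges of G_m end at their
   midpoints, those of D_m at their endpoints. For m >= 1 the marked sides of any two cells are
   equal or disjoint, no centre psi_w(0) lies on a marked side, and a marked side meeting A_m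
   (resp. B_m) lies inside it. So every edge (c, M) of G_m corresponds to exactly two edges
   (c, P), (c, Q) of D_m, where P, Q are the endpoints of the marked side with midpoint M, and
   every edge of D_m arises in this way. Setting u(P) = u(Q) = u(M) carries an admissible
   potential on G_m to one on D_m with twice the energy, and u(M) = (v(P) + v(Q)) / 2 carries
   one on D_m back with at most half the energy, because
   2 (c - (p + q) / 2)^2 <= (c - p)^2 + (c - q)^2. Hence the minimal energies differ by the
   factor 2.

   The value of r makes
   adjacent copies phi_j(F_0), phi_{j+1}(F_0) touch exactly along a common side, while
   non-adjacent copies are disjoint; the rotations and reflections built into psi_j and
   psi~_j put marked sides on both sides of every contact and along the boundary sides
   L_0, L_N, L_{3N-1}, whose patterns of marked sides are rotated copies of each other. *)

section \<open>Similarities of the plane\<close>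

definition plane_similarity :: "(complex \<Rightarrow> complex) \<Rightarrow> bool" where
  "plane_similarity g \<longleftrightarrow> (\<exists>a b f. a \<noteq> 0 \<and> (\<forall>z. g z = a * (if f then cnj z else z) + b))"

lemma plane_similarity_linear: "a \<noteq> 0 \<Longrightarrow> plane_similarity (\<lambda>z. a * z + b)"
  unfolding plane_similarity_def by (intro exI[of _ a] exI[of _ b] exI[of _ False]) simp

lemma plane_similarity_linear_cnj: "a \<noteq> 0 \<Longrightarrow> plane_similarity (\<lambda>z. a * cnj z + b)"
  unfolding plane_similarity_def by (intro exI[of _ a] exI[of _ b] exI[of _ True]) simp

lemma plane_similarity_mult: "a \<noteq> 0 \<Longrightarrow> plane_similarity ((*) a)"
  using plane_similarity_linear[of a 0] by simp

lemma plane_similarity_mult_cnj: "a \<noteq> 0 \<Longrightarrow> plane_similarity (\<lambda>z. a * cnj z)"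
  using plane_similarity_linear_cnj[of a 0] by simp

lemma plane_similarity_id: "plane_similarity id"
  using plane_similarity_linear[of 1 0] by (simp add: id_def)

lemma plane_similarity_comp:
  assumes "plane_similarity g" "plane_similarity h"
  shows "plane_similarity (g \<circ> h)"
proof -
  obtain a b f where a: "a \<noteq> 0" and g: "\<And>z. g z = a * (if f then cnj z else z) + b"
    using assms(1) unfolding plane_similarity_def by blast
  obtain a' b' f' where a': "a' \<noteq> 0" and h: "\<And>z. h z = a' * (if f' then cnj z else z) + b'"
    using assms(2) unfolding plane_similarity_def by blast
  show ?thesis unfolding plane_similarity_def
  proof (intro exI conjI allI)
    show "(if f then cnj a' else a') * a \<noteq> 0" using a a' by simp
    show "(g \<circ> h) z = ((if f then cnj a' else a') * a) * (if f \<noteq> f' then cnj z else z)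
                        + (a * (if f then cnj b' else b') + b)" for z
      by (cases f; cases f') (simp_all add: g h algebra_simps)
  qed
qed

lemma plane_similarity_affine:
  assumes "plane_similarity g"
  shows "g ((1 - u) *\<^sub>R x + u *\<^sub>R y) = (1 - u) *\<^sub>R g x + u *\<^sub>R g y"
proof -
  obtain a b f where g: "\<And>z. g z = a * (if f then cnj z else z) + b"
    using assms unfolding plane_similarity_def by blast
  show ?thesis by (cases f) (simp_all add: g scaleR_conv_of_real algebra_simps)
qed

lemma plane_similarity_inj: "plane_similarity g \<Longrightarrow> inj g"
proof (rule injI)
  fix x y assume "plane_similarity g" "g x = g y"
  then obtain a b f where "a \<noteq> 0" "\<forall>z. g z = a * (if f then cnj z else z) + b"
    unfolding plane_similarity_def by blast
  with \<open>g x = g y\<close> show "x = y" by (cases f) auto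
qed

lemma plane_similarity_closed_segment:
  assumes "plane_similarity g"
  shows "g ` closed_segment x y = closed_segment (g x) (g y)"
proof
  show "g ` closed_segment x y \<subseteq> closed_segment (g x) (g y)"
    using plane_similarity_affine[OF assms] by (fastforce simp: in_segment)
  show "closed_segment (g x) (g y) \<subseteq> g ` closed_segment x y"
  proof
    fix w assume "w \<in> closed_segment (g x) (g y)"
    then obtain u where u: "0 \<le> u" "u \<le> 1" "w = (1 - u) *\<^sub>R g x + u *\<^sub>R g y"
      unfolding in_segment by blast
    then have "w = g ((1 - u) *\<^sub>R x + u *\<^sub>R y)" using plane_similarity_affine[OF assms] by simp
    moreover have "(1 - u) *\<^sub>R x + u *\<^sub>R y \<in> closed_segment x y" using u unfolding in_segment by blast
    ultimately show "w \<in> g ` closed_segment x y" by blast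
  qed
qed

lemma plane_similarity_midpoint:
  assumes "plane_similarity g"
  shows "g (midpoint x y) = midpoint (g x) (g y)"
  using plane_similarity_affine[OF assms, of "1/2" x y] by (simp add: midpoint_def scaleR_add_right)

lemma plane_similarities_agree_on_segment:
  assumes "plane_similarity f" "plane_similarity g" "f a = g a" "f b = g b"
    and "w \<in> closed_segment a b"
  shows "f w = g w"
  using assms plane_similarity_affine[OF assms(1)] plane_similarity_affine[OF assms(2)]
  unfolding in_segment by auto

lemma plane_similarities_swap_on_segment:
  assumes "plane_similarity f" "plane_similarity g" "f a = g b" "f b = g a"
    and "w \<in> closed_segment a b"
  shows "f w = g (a + b - w)"
proof -
  obtain u where w: "w = (1 - u) *\<^sub>R a + u *\<^sub>R b" using assms(5) unfolding in_segment by blast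
  have "a + b - w = (1 - (1 - u)) *\<^sub>R a + (1 - u) *\<^sub>R b"
    unfolding w by (simp add: algebra_simps)
  then show ?thesis
    using plane_similarity_affine[OF assms(1)] plane_similarity_affine[OF assms(2)] assms(3,4) w
    by (simp add: add.commute)
qed

lemma plane_similarities_same_segment:
  assumes f: "plane_similarity f" and g: "plane_similarity g"
    and eq: "f ` closed_segment a b = g ` closed_segment a b"
  shows "(\<forall>w\<in>closed_segment a b. f w = g w) \<or> (\<forall>w\<in>closed_segment a b. f w = g (a + b - w))"
proof -
  have "{f a, f b} = {g a, g b}"
    using eq unfolding plane_similarity_closed_segment[OF f] plane_similarity_closed_segment[OF g]
    by simp
  then have "(f a = g a \<and> f b = g b) \<or> (f a = g b \<and> f b = g a)"
    by (auto simp: doubleton_eq_iff)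
  then show ?thesis
    using plane_similarities_agree_on_segment[OF f g] plane_similarities_swap_on_segment[OF f g]
    by blast
qed

lemma cos_le_cos_reflect:
  assumes "0 \<le> a" "a \<le> pi" "a \<le> x" "x \<le> 2 * pi - a"
  shows "cos x \<le> cos a"
proof (cases "x \<le> pi")
  case True then show ?thesis using assms by (intro cos_monotone_0_pi_le) auto
next
  case False
  then have "cos (2 * pi - x) \<le> cos a" using assms by (intro cos_monotone_0_pi_le) auto
  then show ?thesis by simp
qed

lemma cos_less_cos_reflect:
  assumes "0 \<le> a" "a \<le> pi" "a < x" "x < 2 * pi - a"
  shows "cos x < cos a"
proof (cases "x \<le> pi")
  case True then show ?thesis using assms by (intro cos_monotone_0_pi) auto
next
  case False
  then have "cos (2 * pi - x) < cos a" using assms by (intro cos_monotone_0_pi) auto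
  then show ?thesis by simp
qed

lemma convex_hull_supporting_hyperplane:
  fixes S :: "'a::euclidean_space set"
  assumes "finite S" and le: "\<And>x. x \<in> S \<Longrightarrow> d \<bullet> x \<le> c"
    and z: "z \<in> convex hull S" "d \<bullet> z = c"
  shows "z \<in> convex hull {x \<in> S. d \<bullet> x = c}"
proof -
  have "convex hull S \<subseteq> {x. d \<bullet> x \<le> c}"
    using le by (intro hull_minimal convex_halfspace_le) auto
  then have "(convex hull S \<inter> {x. d \<bullet> x = c}) face_of convex hull S"
    by (intro face_of_Int_supporting_hyperplane_le) auto
  then obtain S' where S': "S' \<subseteq> S" "convex hull S \<inter> {x. d \<bullet> x = c} = convex hull S'"
    using face_of_convex_hull_subset finite_imp_compact[OF \<open>finite S\<close>] by metis
  then have "S' \<subseteq> {x \<in> S. d \<bullet> x = c}" using hull_subset[of S' convex] by blast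
  then show ?thesis using S'(2) z hull_mono by blast
qed

lemma convex_comb_eq_upper_bound:
  fixes a b c t :: real
  assumes "0 < t" "t < 1" "a \<le> c" "b \<le> c" "t * a + (1 - t) * b = c"
  shows "a = c" and "b = c"
proof -
  have "t * a \<le> t * c" "(1 - t) * b \<le> (1 - t) * c"
    using assms by (intro mult_left_mono; simp)+
  then have "t * a \<le> t * c" "b - t * b \<le> c - t * c" "t * a + b - t * b = c"
    using assms(5) by (simp_all add: algebra_simps)
  then have "t * a = t * c" "(1 - t) * b = (1 - t) * c" by (linarith, simp add: algebra_simps)
  then show "a = c" "b = c" using assms(1,2) by simp_all
qed

lemma two_sq_dist_midpoint_le: "2 * (c - (p + q) / 2)\<^sup>2 \<le> (c - p)\<^sup>2 + (c - q)\<^sup>2" for c p q :: real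
proof -
  have "(c - p)\<^sup>2 + (c - q)\<^sup>2 - 2 * (c - (p + q) / 2)\<^sup>2 = (p - q)\<^sup>2 / 2"
    by (simp add: power2_eq_square field_simps)
  moreover have "0 \<le> (p - q)\<^sup>2 / 2" by simp
  ultimately show ?thesis by linarith
qed

lemma cInf_eq_scaled:
  fixes A B :: "real set" and c :: real
  assumes ne: "A \<noteq> {}" "B \<noteq> {}" and bdd: "bdd_below A" "bdd_below B" and "0 < c"
    and AB: "\<And>a. a \<in> A \<Longrightarrow> \<exists>b\<in>B. b \<le> c * a"
    and BA: "\<And>b. b \<in> B \<Longrightarrow> \<exists>a\<in>A. c * a \<le> b"
  shows "Inf B = c * Inf A"
proof (rule antisym)
  have "Inf B / c \<le> Inf A"
  proof (rule cInf_greatest[OF ne(1)])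
    fix a assume "a \<in> A"
    then obtain b where "b \<in> B" "b \<le> c * a" using AB by blast
    then have "Inf B \<le> c * a" using cInf_lower[OF _ bdd(2)] by fastforce
    then show "Inf B / c \<le> a" using \<open>0 < c\<close> by (simp add: divide_simps mult.commute)
  qed
  then show "Inf B \<le> c * Inf A" using \<open>0 < c\<close> by (simp add: divide_simps mult.commute)
  show "c * Inf A \<le> Inf B"
  proof (rule cInf_greatest[OF ne(2)])
    fix b assume "b \<in> B"
    then obtain a where "a \<in> A" "c * a \<le> b" using BA by blast
    then show "c * Inf A \<le> b"
      using cInf_lower[OF _ bdd(1)] \<open>0 < c\<close> by (meson mult_left_mono order.trans less_imp_le)
  qed
qed

section \<open>The regular polygon \<open>F\<^sub>0\<close>\<close>

locale regular_polygon =
  fixes N :: nat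
  assumes N_ge_2: "2 \<le> N"
begin

lemma N_pos: "0 < real N"
  using N_ge_2 by simp

definition \<zeta> :: "int \<Rightarrow> complex" where
  "\<zeta> k = cis (real_of_int k * pi / (4 * real N))"

lemma zeta_add: "\<zeta> (a + b) = \<zeta> a * \<zeta> b"
  unfolding \<zeta>_def by (simp add: cis_mult add_divide_distrib distrib_right)

lemma zeta_0 [simp]: "\<zeta> 0 = 1"
  by (simp add: \<zeta>_def)

lemma zeta_eqI: "a = b + 8 * int N * t \<Longrightarrow> \<zeta> a = \<zeta> b"
proof -
  assume a: "a = b + 8 * int N * t"
  have "real_of_int (8 * int N * t) * pi / (4 * real N) = 2 * pi * real_of_int t"
    using N_pos by (simp add: field_simps)
  then have "\<zeta> (8 * int N * t) = 1" unfolding \<zeta>_def by simp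
  then show ?thesis unfolding a zeta_add by simp
qed

lemma zeta_cnj: "cnj (\<zeta> k) = \<zeta> (- k)"
  by (simp add: \<zeta>_def cis_cnj)

lemma norm_zeta [simp]: "norm (\<zeta> k) = 1"
  by (simp add: \<zeta>_def)

lemma zeta_nonzero [simp]: "\<zeta> k \<noteq> 0"
  using norm_zeta[of k] by (metis norm_zero zero_neq_one)

lemma Re_zeta: "Re (\<zeta> k) = cos (real_of_int k * pi / (4 * real N))"
  by (simp add: \<zeta>_def)

lemma zeta_2N: "\<zeta> (2 * int N) = \<i>"
proof -
  have "real_of_int (2 * int N) * pi / (4 * real N) = pi / 2" using N_pos by (simp add: field_simps)
  then show ?thesis unfolding \<zeta>_def by (simp only: cis_pi_half)
qed

lemma zeta_4N: "\<zeta> (4 * int N) = -1"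
proof -
  have "real_of_int (4 * int N) * pi / (4 * real N) = pi" using N_pos by (simp add: field_simps)
  then show ?thesis unfolding \<zeta>_def by (simp only: cis_pi)
qed

lemma vC_zeta: "vC N j = \<zeta> (2 * int j - 1)"
  unfolding vC_def \<zeta>_def cis_conv_exp by simp

lemma theta_iterate: "(theta N ^^ n) z = \<zeta> (2 * int n) * z"
proof (induction n arbitrary: z)
  case (Suc n)
  have "theta N w = \<zeta> 2 * w" for w
    unfolding theta_def \<zeta>_def cis_conv_exp using N_pos by (simp add: field_simps)
  moreover have "\<zeta> (2 * int (Suc n)) = \<zeta> 2 * \<zeta> (2 * int n)"
    by (simp add: zeta_add[symmetric] algebra_simps)
  ultimately show ?case using Suc by (simp add: funpow_Suc_right)
qed simp

definition apothem :: real where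
  "apothem = cos (pi / (4 * real N))"

definition half_side :: real where
  "half_side = sin (pi / (4 * real N))"

abbreviation r :: real where
  "r \<equiv> ratio N"

lemma angle_bounds: "0 < pi / (4 * real N)" "pi / (4 * real N) < pi / 4"
  using N_pos N_ge_2 by (auto simp: field_simps)

lemma half_side_pos: "0 < half_side"
  unfolding half_side_def using angle_bounds by (intro sin_gt_zero) auto

lemma apothem_pos: "0 < apothem"
  unfolding apothem_def using angle_bounds by (intro cos_gt_zero) auto

lemma ratio_eq: "r = half_side / (half_side + apothem)"
proof -
  have "r = 1 / (1 + apothem / half_side)"
    unfolding ratio_def cot_def apothem_def half_side_def by simp
  then show ?thesis using half_side_pos apothem_pos by (simp add: field_simps)
qed

lemma ratio_pos: "0 < r"
  using ratio_eq half_side_pos apothem_pos by simp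

lemma ratio_less_1: "r < 1"
  using ratio_eq half_side_pos apothem_pos by simp

text \<open>This is what the choice of \<open>r\<close> achieves: adjacent copies \<open>\<phi>\<^sub>j(F\<^sub>0)\<close> and
  \<open>\<phi>\<^sub>j\<^sub>+\<^sub>1(F\<^sub>0)\<close> touch along a full side.\<close>

lemma ratio_apothem: "r * apothem = (1 - r) * half_side"
  using ratio_eq half_side_pos apothem_pos by (simp add: field_simps)

lemma zeta_1: "\<zeta> 1 = complex_of_real apothem + \<i> * complex_of_real half_side"
  by (simp add: \<zeta>_def apothem_def half_side_def complex_eq_iff)

lemma zeta_minus_1: "\<zeta> (-1) = complex_of_real apothem - \<i> * complex_of_real half_side"
  by (simp add: \<zeta>_def apothem_def half_side_def complex_eq_iff)

lemma Re_zeta_odd_less: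
  assumes "2 \<le> e" "e < 4 * int N"
  shows "Re (\<zeta> (2 * e - 1)) < apothem"
proof -
  define x where "x = real_of_int (2 * e - 1) * pi / (4 * real N)"
  have "pi / (4 * real N) < x"
    unfolding x_def using assms N_pos by (simp add: field_simps)
  moreover have "x < 2 * pi - pi / (4 * real N)"
  proof -
    have "real_of_int (2 * e - 1) \<le> 8 * real N - 3" using assms by linarith
    then have "x \<le> (8 * real N - 3) * pi / (4 * real N)"
      unfolding x_def using N_pos by (intro divide_right_mono mult_right_mono) auto
    also have "\<dots> < 2 * pi - pi / (4 * real N)" using N_pos by (simp add: field_simps)
    finally show ?thesis .
  qed
  ultimately have "cos x < apothem"
    unfolding apothem_def using angle_bounds by (intro cos_less_cos_reflect) auto
  then show ?thesis unfolding x_def Re_zeta .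
qed

lemma zeta_odd_mod: "\<zeta> (2 * d - 1) = \<zeta> (2 * (d mod (4 * int N)) - 1)"
proof (rule zeta_eqI[where t = "d div (4 * int N)"])
  have "d = d mod (4 * int N) + 4 * int N * (d div (4 * int N))" by simp
  then show "2 * d - 1 = 2 * (d mod (4 * int N)) - 1 + 8 * int N * (d div (4 * int N))"
    by linarith
qed

lemma Re_zeta_odd_le: "Re (\<zeta> (2 * d - 1)) \<le> apothem"
  and Re_zeta_odd_eq_iff: "Re (\<zeta> (2 * d - 1)) = apothem \<longleftrightarrow> d mod (4 * int N) \<in> {0, 1}"
proof -
  define e where "e = d mod (4 * int N)"
  have e: "0 \<le> e" "e < 4 * int N" unfolding e_def using N_pos by auto
  have eq: "Re (\<zeta> (2 * d - 1)) = Re (\<zeta> (2 * e - 1))" unfolding e_def by (rule arg_cong[OF zeta_odd_mod])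
  have on: "Re (\<zeta> (2 * e - 1)) = apothem" if "e \<in> {0, 1}"
    using that zeta_1 zeta_minus_1 by auto
  have off: "Re (\<zeta> (2 * e - 1)) < apothem" if "e \<notin> {0, 1}"
    using that e by (intro Re_zeta_odd_less) auto
  show "Re (\<zeta> (2 * d - 1)) \<le> apothem"
    unfolding eq using on off by (cases "e \<in> {0, 1}") auto
  show "Re (\<zeta> (2 * d - 1)) = apothem \<longleftrightarrow> d mod (4 * int N) \<in> {0, 1}"
    unfolding eq e_def[symmetric] using on off by (cases "e \<in> {0, 1}") auto
qed

text \<open>\<open>\<zeta>(2q)\<close> is the outer unit normal of the side \<open>L\<^sub>q\<close>.\<close>

definition normal_coord :: "int \<Rightarrow> complex \<Rightarrow> real" where
  "normal_coord q z = \<zeta> (2 * q) \<bullet> z"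

lemma normal_coord_eq_Re: "normal_coord q z = Re (z * cnj (\<zeta> (2 * q)))"
  unfolding normal_coord_def by (simp add: inner_complex_def algebra_simps)

lemma normal_coord_vC: "normal_coord q (vC N k) = Re (\<zeta> (2 * (int k - q) - 1))"
proof -
  have "vC N k * cnj (\<zeta> (2 * q)) = \<zeta> (2 * (int k - q) - 1)"
    unfolding vC_zeta zeta_cnj zeta_add[symmetric] by (simp add: algebra_simps)
  then show ?thesis unfolding normal_coord_eq_Re by simp
qed

lemma normal_coord_vC_le: "normal_coord q (vC N k) \<le> apothem"
  unfolding normal_coord_vC by (rule Re_zeta_odd_le)

lemma normal_coord_vC_eq_iff:
  "normal_coord q (vC N k) = apothem \<longleftrightarrow> (int k - q) mod (4 * int N) \<in> {0, 1}"
  unfolding normal_coord_vC by (rule Re_zeta_odd_eq_iff)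

lemma vC_eqI: "(int k - int q) mod (4 * int N) = 0 \<Longrightarrow> vC N k = vC N q"
proof -
  assume "(int k - int q) mod (4 * int N) = 0"
  then obtain t where "int k - int q = 4 * int N * t" by (metis dvd_def mod_0_imp_dvd)
  then have "2 * int k - 1 = (2 * int q - 1) + 8 * int N * t" by linarith
  then show ?thesis unfolding vC_zeta by (rule zeta_eqI)
qed

abbreviation vertices :: "complex set" where
  "vertices \<equiv> vC N ` Lam N"

lemma vC_in_vertices: "vC N j \<in> vertices"
proof -
  have "(int j - int (j mod (4 * N))) mod (4 * int N) = 0"
    by (simp add: of_nat_mod mod_diff_right_eq)
  then have "vC N j = vC N (j mod (4 * N))" by (rule vC_eqI)
  then show ?thesis using N_pos unfolding Lam_def by auto
qed

lemma convex_F0: "convex (F0 N)"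
  unfolding F0_def by simp

lemma vC_in_F0: "vC N j \<in> F0 N"
  unfolding F0_def by (rule hull_inc[OF vC_in_vertices])

lemma seg_subset_F0: "seg N q \<subseteq> F0 N"
  unfolding seg_def by (intro closed_segment_subset vC_in_F0 convex_F0)

lemma F0_normal_coord_le: "z \<in> F0 N \<Longrightarrow> normal_coord q z \<le> apothem"
proof -
  have "convex hull vertices \<subseteq> {z. \<zeta> (2 * q) \<bullet> z \<le> apothem}"
    using normal_coord_vC_le unfolding normal_coord_def
    by (intro hull_minimal convex_halfspace_le) auto
  then show "z \<in> F0 N \<Longrightarrow> normal_coord q z \<le> apothem"
    unfolding F0_def normal_coord_def by auto
qed

lemma normal_coord_seg: "z \<in> seg N q \<Longrightarrow> normal_coord (int q) z = apothem"
proof -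
  assume "z \<in> seg N q"
  then obtain u where z: "z = (1 - u) *\<^sub>R vC N q + u *\<^sub>R vC N (q + 1)"
    unfolding seg_def in_segment by blast
  have "(int (q + 1) - int q) mod (4 * int N) = 1"
    using N_ge_2 by (simp add: mod_pos_pos_trivial)
  then have "normal_coord q (vC N q) = apothem" "normal_coord q (vC N (q + 1)) = apothem"
    unfolding normal_coord_vC_eq_iff by simp_all
  moreover have "normal_coord q z = (1 - u) * normal_coord q (vC N q) + u * normal_coord q (vC N (q + 1))"
    unfolding z normal_coord_def by (simp add: inner_add_right)
  ultimately show ?thesis by (simp add: algebra_simps)
qed

lemma vertices_normal_coord_eq:
  "{x \<in> vertices. normal_coord (int q) x = apothem} \<subseteq> {vC N q, vC N (q + 1)}"
proof clarify
  fix k assume "normal_coord q (vC N k) = apothem" "vC N k \<noteq> vC N q"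
  then have "(int k - int q) mod (4 * int N) = 1"
    using vC_eqI normal_coord_vC_eq_iff by blast
  moreover have "(int k - int (q + 1)) mod (4 * int N) = ((int k - int q) mod (4 * int N) - 1) mod (4 * int N)"
    by (simp add: mod_diff_left_eq algebra_simps)
  ultimately have "(int k - int (q + 1)) mod (4 * int N) = 0" by simp
  then show "vC N k = vC N (q + 1)" by (rule vC_eqI)
qed

lemma F0_face:
  assumes "z \<in> F0 N" "normal_coord (int q) z = apothem"
  shows "z \<in> seg N q"
proof -
  have "finite vertices" unfolding Lam_def by simp
  then have "z \<in> convex hull {x \<in> vertices. normal_coord (int q) x = apothem}"
    using assms normal_coord_vC_le
    unfolding F0_def normal_coord_def
    by (intro convex_hull_supporting_hyperplane) auto
  then show ?thesis
    using hull_mono[OF vertices_normal_coord_eq] unfolding seg_def segment_convex_hull by blast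
qed

lemma vC_neq_succ: "vC N q \<noteq> vC N (q + 1)"
proof
  have "(-1 :: int) mod (4 * int N) = 4 * int N - 1"
    using N_pos by (simp add: zmod_minus1)
  then have "normal_coord (int (q + 1)) (vC N q) \<noteq> apothem"
    unfolding normal_coord_vC_eq_iff using N_ge_2 by simp
  moreover assume "vC N q = vC N (q + 1)"
  ultimately show False using normal_coord_vC_eq_iff by simp
qed

lemma seg_disjoint:
  assumes "(int a - int b) mod (4 * int N) \<notin> {0, 1, 4 * int N - 1}"
  shows "seg N a \<inter> seg N b = {}"
proof -
  define d where "d = (int a - int b) mod (4 * int N)"
  have d: "0 \<le> d" "d < 4 * int N" "d \<notin> {0, 1, 4 * int N - 1}"
    unfolding d_def using N_pos assms by auto
  have "(int (a + 1) - int b) mod (4 * int N) = ((int a - int b) + 1) mod (4 * int N)"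
    by (simp add: algebra_simps)
  also have "\<dots> = (d + 1) mod (4 * int N)"
    unfolding d_def by (simp add: mod_add_left_eq)
  also have "\<dots> = d + 1"
    using d by (intro mod_pos_pos_trivial) auto
  finally have "normal_coord b (vC N a) \<noteq> apothem" "normal_coord b (vC N (a + 1)) \<noteq> apothem"
    using d unfolding normal_coord_vC_eq_iff d_def[symmetric] by auto
  then have empty: "{x \<in> {vC N a, vC N (a + 1)}. \<zeta> (2 * int b) \<bullet> x = apothem} = {}"
    unfolding normal_coord_def by auto
  show ?thesis
  proof (rule ccontr)
    assume "seg N a \<inter> seg N b \<noteq> {}"
    then obtain z where z: "z \<in> seg N a" "z \<in> seg N b" by blast
    have "z \<in> convex hull {x \<in> {vC N a, vC N (a + 1)}. \<zeta> (2 * int b) \<bullet> x = apothem}"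
    proof (rule convex_hull_supporting_hyperplane)
      show "z \<in> convex hull {vC N a, vC N (a + 1)}"
        using z(1) unfolding seg_def segment_convex_hull .
      show "\<zeta> (2 * int b) \<bullet> z = apothem"
        using normal_coord_seg[OF z(2)] unfolding normal_coord_def .
      show "\<zeta> (2 * int b) \<bullet> x \<le> apothem" if "x \<in> {vC N a, vC N (a + 1)}" for x
        using that normal_coord_vC_le unfolding normal_coord_def by blast
    qed simp
    then show False unfolding empty by simp
  qed
qed

end

section \<open>The first-level copies \<open>\<phi>\<^sub>j(F\<^sub>0)\<close>\<close>

context regular_polygon
begin

lemma phi_eq: "phi N j x = of_real r * x + (1 - of_real r) * vC N j"
  unfolding phi_def by (simp add: algebra_simps)

lemma phi_similarity: "plane_similarity (phi N j)"
  unfolding phi_eq using ratio_pos by (intro plane_similarity_linear) simp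

lemma phi_in_F0: "x \<in> F0 N \<Longrightarrow> phi N j x \<in> F0 N"
  using convexD[OF convex_F0 vC_in_F0, of x "1 - r" r j] ratio_pos ratio_less_1
  by (simp add: phi_eq scaleR_conv_of_real algebra_simps)

lemma normal_coord_phi:
  "normal_coord q (phi N j x) = r * normal_coord q x + (1 - r) * normal_coord q (vC N j)"
proof -
  have "phi N j x = r *\<^sub>R x + (1 - r) *\<^sub>R vC N j"
    unfolding phi_eq by (simp add: scaleR_conv_of_real)
  then show ?thesis unfolding normal_coord_def by (simp add: inner_add_right)
qed

lemma phi_in_seg:
  assumes x: "x \<in> F0 N" and p: "phi N j x \<in> seg N q"
  shows "x \<in> seg N q" and "(int j - int q) mod (4 * int N) \<in> {0, 1}"
proof -
  have "r * normal_coord q x + (1 - r) * normal_coord q (vC N j) = apothem"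
    using normal_coord_seg[OF p] normal_coord_phi by simp
  moreover have "normal_coord q x \<le> apothem" "normal_coord q (vC N j) \<le> apothem"
    using F0_normal_coord_le x vC_in_F0 by blast+
  ultimately have "normal_coord q x = apothem" "normal_coord q (vC N j) = apothem"
    using convex_comb_eq_upper_bound[OF ratio_pos ratio_less_1] by blast+
  then show "x \<in> seg N q" and "(int j - int q) mod (4 * int N) \<in> {0, 1}"
    using F0_face x normal_coord_vC_eq_iff by auto
qed

lemma norm_F0_le_1: "x \<in> F0 N \<Longrightarrow> norm x \<le> 1"
proof -
  have "convex hull vertices \<subseteq> cball 0 1"
    by (intro hull_minimal convex_cball) (auto simp: vC_zeta)
  then show "x \<in> F0 N \<Longrightarrow> norm x \<le> 1" unfolding F0_def by auto
qed

lemma phi_near_vertex: "x \<in> F0 N \<Longrightarrow> norm (phi N j x - of_real (1 - r) * vC N j) \<le> r"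
proof -
  assume "x \<in> F0 N"
  then have "r * norm x \<le> r" using norm_F0_le_1 ratio_pos by (simp add: mult_left_le)
  moreover have "phi N j x - of_real (1 - r) * vC N j = of_real r * x"
    unfolding phi_eq by (simp add: algebra_simps)
  ultimately show ?thesis using ratio_pos by (simp add: norm_mult)
qed

lemma vC_dist_ge:
  assumes "2 \<le> (int j - int j') mod (4 * int N)" "(int j - int j') mod (4 * int N) \<le> 4 * int N - 2"
  shows "2 - 2 * cos (pi / real N) \<le> (norm (vC N j - vC N j'))\<^sup>2"
proof -
  define e where "e = (int j - int j') mod (4 * int N)"
  have d: "int j - int j' = e + 4 * int N * ((int j - int j') div (4 * int N))"
    unfolding e_def by simp
  have "vC N j * cnj (vC N j') = \<zeta> (2 * e)"
    unfolding vC_zeta zeta_cnj zeta_add[symmetric]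
    by (rule zeta_eqI[where t = "(int j - int j') div (4 * int N)"]) (use d in linarith)
  then have "Re (vC N j * cnj (vC N j')) = Re (\<zeta> (2 * e))" by simp
  then have "vC N j \<bullet> vC N j' = Re (\<zeta> (2 * e))" by (simp add: inner_complex_def)
  moreover have "Re (\<zeta> (2 * e)) \<le> cos (pi / real N)"
    unfolding Re_zeta
  proof (rule cos_le_cos_reflect)
    have "2 \<le> e" "e \<le> 4 * int N - 2" using assms unfolding e_def by auto
    then have "4 * pi \<le> real_of_int (2 * e) * pi" "real_of_int (2 * e) * pi \<le> (8 * real N - 4) * pi"
      by (intro mult_right_mono; simp)+
    then show "pi / real N \<le> real_of_int (2 * e) * pi / (4 * real N)"
      and "real_of_int (2 * e) * pi / (4 * real N) \<le> 2 * pi - pi / real N"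
      using N_pos by (simp_all add: field_simps)
    show "0 \<le> pi / real N" "pi / real N \<le> pi" using N_pos N_ge_2 by (simp_all add: field_simps)
  qed
  moreover have "(norm (vC N j - vC N j'))\<^sup>2 = 2 - 2 * (vC N j \<bullet> vC N j')"
    using dot_norm_neg[of "vC N j" "vC N j'"] by (simp add: vC_zeta)
  ultimately show ?thesis by simp
qed

lemma separation_bound: "4 * r\<^sup>2 < (1 - r)\<^sup>2 * (2 - 2 * cos (pi / real N))"
proof -
  define t where "t = pi / (4 * real N)"
  have "pi / real N = 2 * (2 * t)" unfolding t_def using N_pos by (simp add: field_simps)
  then have "cos (pi / real N) = 1 - 2 * (sin (2 * t))\<^sup>2" by (simp only: cos_double_sin)
  also have "sin (2 * t) = 2 * half_side * apothem"
    unfolding sin_double t_def half_side_def apothem_def by simp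
  finally have "2 - 2 * cos (pi / real N) = 16 * half_side\<^sup>2 * apothem\<^sup>2"
    by (simp add: power2_eq_square algebra_simps)
  moreover have "1 - r = apothem / (half_side + apothem)"
    using ratio_eq half_side_pos apothem_pos by (simp add: field_simps)
  ultimately have "(1 - r)\<^sup>2 * (2 - 2 * cos (pi / real N))
      = 4 * half_side\<^sup>2 * (2 * apothem\<^sup>2)\<^sup>2 / (half_side + apothem)\<^sup>2"
    by (simp add: power_divide power2_eq_square)
  moreover have "1 < 2 * apothem\<^sup>2"
    using cos_gt_zero[of "2 * (pi / (4 * real N))"] angle_bounds
    unfolding apothem_def cos_double_cos by simp
  then have "1 < (2 * apothem\<^sup>2)\<^sup>2" by (rule one_less_power) simp
  then have "4 * half_side\<^sup>2 * 1 < 4 * half_side\<^sup>2 * (2 * apothem\<^sup>2)\<^sup>2"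
    using half_side_pos by (intro mult_strict_left_mono) auto
  ultimately show ?thesis
    unfolding ratio_eq using half_side_pos apothem_pos
    by (simp add: power_divide divide_strict_right_mono)
qed

lemma phi_disjoint_nonadjacent:
  assumes "2 \<le> (int j - int j') mod (4 * int N)" "(int j - int j') mod (4 * int N) \<le> 4 * int N - 2"
    and x: "x \<in> F0 N" and y: "y \<in> F0 N"
  shows "phi N j x \<noteq> phi N j' y"
proof
  assume eq: "phi N j x = phi N j' y"
  have "norm (of_real (1 - r) * vC N j - of_real (1 - r) * vC N j')
        \<le> norm (phi N j x - of_real (1 - r) * vC N j) + norm (phi N j' y - of_real (1 - r) * vC N j')"
    using eq by (metis norm_diff_triangle_le order_refl norm_minus_commute)
  also have "\<dots> \<le> r + r"
    using phi_near_vertex x y by (intro add_mono) auto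
  finally have "(1 - r) * norm (vC N j - vC N j') \<le> 2 * r"
    unfolding right_diff_distrib[symmetric] norm_mult norm_of_real using ratio_less_1 by simp
  then have "(1 - r)\<^sup>2 * (norm (vC N j - vC N j'))\<^sup>2 \<le> 4 * r\<^sup>2"
    using power_mono[of "(1 - r) * norm (vC N j - vC N j')" "2 * r" 2] ratio_less_1
    by (simp add: power_mult_distrib)
  moreover have "(1 - r)\<^sup>2 * (2 - 2 * cos (pi / real N)) \<le> (1 - r)\<^sup>2 * (norm (vC N j - vC N j'))\<^sup>2"
    using vC_dist_ge[OF assms(1,2)] by (intro mult_left_mono) auto
  ultimately show False using separation_bound by simp
qed

lemma zeta_6N: "\<zeta> (6 * int N) = - \<i>"
  using zeta_add[of "4 * int N" "2 * int N"] zeta_4N zeta_2N by simp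

text \<open>In the direction \<open>\<zeta>(2(j + N))\<close> the copy \<open>\<phi>\<^sub>j(F\<^sub>0)\<close> extends up to
  \<open>r \<cdot> apothem - (1 - r) \<cdot> half_side = 0\<close>, and \<open>\<phi>\<^sub>j\<^sub>+\<^sub>1(F\<^sub>0)\<close> starts there.\<close>

lemma phi_adjacent_meet:
  assumes x: "x \<in> F0 N" and y: "y \<in> F0 N" and eq: "phi N j x = phi N (j + 1) y"
  shows "x \<in> seg N (j + N)"
proof -
  define q where "q = int (j + N)"
  have m2N: "\<zeta> (- 2 * int N) = - \<i>"
    using zeta_cnj[of "2 * int N"] zeta_2N by simp
  have "\<zeta> (2 * (int j - q) - 1) = \<zeta> (- 2 * int N) * \<zeta> (-1)"
    "\<zeta> (2 * (int (j + 1) - q) - 1) = \<zeta> (- 2 * int N) * \<zeta> 1"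
    unfolding zeta_add[symmetric] q_def by (auto intro!: arg_cong[where f = \<zeta>])
  then have "normal_coord q (vC N j) = - half_side" "normal_coord q (vC N (j + 1)) = half_side"
    unfolding normal_coord_vC m2N zeta_1 zeta_minus_1 by simp_all
  moreover have "normal_coord q y = - normal_coord (q + 2 * int N) y"
    unfolding normal_coord_def
    using zeta_add[of "2 * q" "4 * int N"] zeta_4N by (simp add: algebra_simps)
  ultimately have "r * normal_coord q x - (1 - r) * half_side
                   = - r * normal_coord (q + 2 * int N) y + (1 - r) * half_side"
    using eq normal_coord_phi[of q] by (metis mult_minus_right mult_minus_left diff_conv_add_uminus)
  moreover have "normal_coord q x \<le> apothem" "normal_coord (q + 2 * int N) y \<le> apothem"
    using F0_normal_coord_le x y by blast+
  ultimately have "r * normal_coord q x + r * normal_coord (q + 2 * int N) y = 2 * (r * apothem)"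
    "r * normal_coord q x \<le> r * apothem" "r * normal_coord (q + 2 * int N) y \<le> r * apothem"
    using ratio_apothem ratio_pos by (simp_all add: algebra_simps)
  then have "r * normal_coord q x = r * apothem" by linarith
  then have "normal_coord q x = apothem" using ratio_pos by simp
  then show ?thesis using F0_face[OF x] unfolding q_def by blast
qed

lemma phi_adjacent_common_side: "phi N j ` seg N (j + N) = phi N (j + 1) ` seg N (j + 3 * N)"
proof -
  have key: "of_real r * \<i> * (\<zeta> 1 + \<zeta> (-1)) + (1 - of_real r) * (\<zeta> (-1) - \<zeta> 1) = 0"
  proof -
    have "of_real r * \<i> * (\<zeta> 1 + \<zeta> (-1)) + (1 - of_real r) * (\<zeta> (-1) - \<zeta> 1)
          = 2 * \<i> * (of_real (r * apothem) - of_real ((1 - r) * half_side))"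
      unfolding zeta_1 zeta_minus_1 by (simp add: algebra_simps)
    then show ?thesis unfolding ratio_apothem by simp
  qed
  have vs: "vC N j = \<zeta> (2 * int j) * \<zeta> (-1)" "vC N (j + 1) = \<zeta> (2 * int j) * \<zeta> 1"
    "vC N (j + N) = \<zeta> (2 * int j) * \<zeta> (2 * int N) * \<zeta> (-1)"
    "vC N (j + N + 1) = \<zeta> (2 * int j) * \<zeta> (2 * int N) * \<zeta> 1"
    "vC N (j + 3 * N) = \<zeta> (2 * int j) * \<zeta> (6 * int N) * \<zeta> (-1)"
    "vC N (j + 3 * N + 1) = \<zeta> (2 * int j) * \<zeta> (6 * int N) * \<zeta> 1"
    unfolding vC_zeta zeta_add[symmetric] by (simp_all add: algebra_simps)
  have "phi N j (vC N (j + N)) = phi N (j + 1) (vC N (j + 3 * N + 1))"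
    "phi N j (vC N (j + N + 1)) = phi N (j + 1) (vC N (j + 3 * N))"
    unfolding phi_eq vs zeta_2N zeta_6N
    using arg_cong[OF key, of "\<lambda>w. \<zeta> (2 * int j) * w"] by (simp_all add: algebra_simps)
  then show ?thesis
    unfolding seg_def plane_similarity_closed_segment[OF phi_similarity]
    by (simp add: closed_segment_commute)
qed

end

section \<open>The maps \<open>\<psi>\<^sub>j\<close> and \<open>\<psi>\<tilde>\<^sub>j\<close>\<close>

context regular_polygon
begin

lemma zeta_odd_in_vertices: "\<zeta> (2 * d - 1) \<in> vertices"
proof -
  have "\<zeta> (2 * d - 1) = vC N (nat (d mod (4 * int N)))"
    unfolding vC_zeta zeta_odd_mod[of d] using N_pos by simp
  moreover have "nat (d mod (4 * int N)) \<in> Lam N"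
    unfolding Lam_def using N_pos by (simp add: nat_less_iff)
  ultimately show ?thesis by blast
qed

lemma rotate_vC: "\<zeta> (2 * a) * vC N k = \<zeta> (2 * (a + int k) - 1)"
  unfolding vC_zeta zeta_add[symmetric] by (simp add: algebra_simps)

lemma cnj_vC: "cnj (vC N k) = \<zeta> (2 * (1 - int k) - 1)"
  unfolding vC_zeta zeta_cnj by (simp add: algebra_simps)

lemma F0_image_subset:
  assumes "linear f" "f ` vertices \<subseteq> vertices"
  shows "f ` F0 N \<subseteq> F0 N"
  unfolding F0_def convex_hull_linear_image[OF assms(1)] using assms(2) by (rule hull_mono)

lemma rotate_in_F0: "z \<in> F0 N \<Longrightarrow> \<zeta> (2 * a) * z \<in> F0 N"
proof -
  have "(\<lambda>z. \<zeta> (2 * a) * z) ` vertices \<subseteq> vertices"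
    unfolding image_subset_iff using zeta_odd_in_vertices by (auto simp only: rotate_vC)
  then have "(\<lambda>z. \<zeta> (2 * a) * z) ` F0 N \<subseteq> F0 N"
    by (intro F0_image_subset linear_times)
  then show "z \<in> F0 N \<Longrightarrow> \<zeta> (2 * a) * z \<in> F0 N" by blast
qed

lemma cnj_in_F0: "z \<in> F0 N \<Longrightarrow> cnj z \<in> F0 N"
proof -
  have "cnj ` vertices \<subseteq> vertices"
    unfolding image_subset_iff using zeta_odd_in_vertices by (auto simp only: cnj_vC)
  then have "cnj ` F0 N \<subseteq> F0 N"
    by (intro F0_image_subset linear_cnj)
  then show "z \<in> F0 N \<Longrightarrow> cnj z \<in> F0 N" by blast
qed

lemma rotate_vC_nat: "\<zeta> (2 * int a) * vC N k = vC N (k + a)"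
  unfolding vC_zeta zeta_add[symmetric] by (simp add: algebra_simps)

lemma rotate_seg: "(\<lambda>z. \<zeta> (2 * int a) * z) ` seg N q = seg N (q + a)"
  unfolding seg_def closed_segment_linear_image[OF linear_times, symmetric] rotate_vC_nat
  by (simp add: algebra_simps)

lemma cnj_seg0: "cnj ` seg N 0 = seg N 0"
  unfolding seg_def closed_segment_linear_image[OF linear_cnj, symmetric] cnj_vC
  by (simp add: vC_zeta closed_segment_commute)

lemma cnj_vC_0: "cnj (vC N 0) = vC N 1" and cnj_vC_1: "cnj (vC N 1) = vC N 0"
  unfolding vC_zeta zeta_cnj by simp_all

lemma cnj_on_seg0:
  assumes "w \<in> seg N 0"
  shows "cnj w = vC N 0 + vC N 1 - w"
proof -
  obtain u where w: "w = (1 - u) *\<^sub>R vC N 0 + u *\<^sub>R vC N 1"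
    using assms unfolding seg_def in_segment by auto
  have "cnj w = (1 - u) *\<^sub>R vC N 1 + u *\<^sub>R vC N 0"
    unfolding w complex_cnj_add complex_cnj_scaleR cnj_vC_0 cnj_vC_1 ..
  then show ?thesis unfolding w by (simp add: algebra_simps)
qed

text \<open>\<open>\<psi>\<^sub>j\<close> and \<open>\<psi>\<tilde>\<^sub>j\<close> differ only in which cells are rotated rather than reflected.\<close>

definition cell :: "(nat \<Rightarrow> bool) \<Rightarrow> nat \<Rightarrow> complex \<Rightarrow> complex" where
  "cell rotated j x = (if rotated j then phi N j (\<zeta> (2 * int j) * x)
                       else phi N j (\<zeta> (2 * int j - 2) * cnj x))"

definition tilde_rotated :: "nat \<Rightarrow> bool" where
  "tilde_rotated j =
     (if even N then (if j = 3 * N - 1 then True else if j = 3 * N then False else even j)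
      else (if j = N then True else if j = N + 1 then False else even j))"

lemma int_pred_odd: "odd k \<Longrightarrow> int (k - Suc 0) = int k - 1"
  by (cases k) auto

lemma psi_cell: "psi N j = cell even j"
  unfolding psi_def cell_def theta_iterate by (auto simp: fun_eq_iff int_pred_odd)

lemma psit_cell: "psit N j = cell tilde_rotated j"
proof -
  have "2 * int (3 * N - 1) = 2 * int (3 * N) - 2" "2 * int N = 2 * int (N + 1) - 2"
    using N_ge_2 by (simp_all add: of_nat_diff)
  then show ?thesis
    unfolding psit_def cell_def tilde_rotated_def psi_def theta_iterate
    using N_ge_2 by (auto simp: fun_eq_iff int_pred_odd)
qed

lemma cell_image:
  "cell rotated j ` S = phi N j ` ((if rotated j then (\<lambda>x. \<zeta> (2 * int j) * x)
                                    else (\<lambda>x. \<zeta> (2 * int j - 2) * cnj x)) ` S)"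
  unfolding cell_def by (auto simp: image_image)

lemma cell_similarity: "plane_similarity (cell rotated j)"
proof (cases "rotated j")
  case True
  then have "cell rotated j = phi N j \<circ> (*) (\<zeta> (2 * int j))"
    by (auto simp: cell_def)
  then show ?thesis by (simp add: plane_similarity_comp phi_similarity plane_similarity_mult)
next
  case False
  then have "cell rotated j = phi N j \<circ> (\<lambda>x. \<zeta> (2 * int j - 2) * cnj x)"
    by (auto simp: cell_def)
  then show ?thesis by (simp add: plane_similarity_comp phi_similarity plane_similarity_mult_cnj)
qed

lemma cell_inj_mem: "cell rotated j x \<in> cell rotated j ` S \<longleftrightarrow> x \<in> S"
  using inj_image_mem_iff[OF plane_similarity_inj[OF cell_similarity]] .

lemma cell_eq_phi: "x \<in> F0 N \<Longrightarrow> \<exists>y\<in>F0 N. cell rotated j x = phi N j y"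
proof -
  assume x: "x \<in> F0 N"
  have "\<zeta> (2 * int j) * x \<in> F0 N" using rotate_in_F0[OF x] .
  moreover have "\<zeta> (2 * int j - 2) * cnj x \<in> F0 N"
    using rotate_in_F0[OF cnj_in_F0[OF x], of "int j - 1"] by (simp add: algebra_simps)
  ultimately show ?thesis unfolding cell_def by auto
qed

lemma cell_in_F0: "x \<in> F0 N \<Longrightarrow> cell rotated j x \<in> F0 N"
  using cell_eq_phi phi_in_F0 by metis

lemma reflect_closed_segment:
  "(\<lambda>x. \<zeta> k * cnj x) ` closed_segment a b = closed_segment (\<zeta> k * cnj a) (\<zeta> k * cnj b)"
  using plane_similarity_closed_segment[OF plane_similarity_linear_cnj[of "\<zeta> k" 0]] by simp

text \<open>\<open>\<phi>\<^sub>j(L\<^sub>j\<^sub>+\<^sub>N)\<close> is the side of the \<open>j\<close>-th copy facing the next copy,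
  \<open>\<phi>\<^sub>j(L\<^sub>j\<^sub>+\<^sub>3\<^sub>N\<^sub>-\<^sub>1)\<close> the side facing the previous one.\<close>

lemma cell_side_to_next:
  obtains \<alpha> where "\<alpha> \<in> {N, 3 * N - 1}" "cell rotated j ` seg N \<alpha> = phi N j ` seg N (j + N)"
proof (cases "rotated j")
  case True
  then have "cell rotated j ` seg N N = phi N j ` seg N (j + N)"
    unfolding cell_image using rotate_seg[of j N] by (simp add: add.commute)
  then show ?thesis using that by blast
next
  case False
  have "\<zeta> (2 * int j - 2) * cnj (vC N (3 * N - 1)) = vC N (j + N + 1)"
    "\<zeta> (2 * int j - 2) * cnj (vC N (3 * N - 1 + 1)) = vC N (j + N)"
    unfolding vC_zeta zeta_cnj zeta_add[symmetric] using N_ge_2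
    by (auto intro!: zeta_eqI[where t = "-1"] simp: of_nat_diff)
  then have "cell rotated j ` seg N (3 * N - 1) = phi N j ` seg N (j + N)"
    unfolding cell_image seg_def using False
    by (simp add: reflect_closed_segment closed_segment_commute)
  then show ?thesis using that by blast
qed

lemma cell_side_to_prev:
  obtains \<beta> where "\<beta> \<in> {N, 3 * N - 1}" "cell rotated j ` seg N \<beta> = phi N j ` seg N (j + 3 * N - 1)"
proof (cases "rotated j")
  case True
  then have "cell rotated j ` seg N (3 * N - 1) = phi N j ` seg N (j + 3 * N - 1)"
    unfolding cell_image using rotate_seg[of j "3 * N - 1"] N_ge_2 by (simp add: add.commute)
  then show ?thesis using that by blast
next
  case False
  have "\<zeta> (2 * int j - 2) * cnj (vC N N) = vC N (j + 3 * N - 1 + 1)"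
    "\<zeta> (2 * int j - 2) * cnj (vC N (N + 1)) = vC N (j + 3 * N - 1)"
    unfolding vC_zeta zeta_cnj zeta_add[symmetric] using N_ge_2
    by (auto intro!: zeta_eqI[where t = "-1"] simp: of_nat_diff)
  then have "cell rotated j ` seg N N = phi N j ` seg N (j + 3 * N - 1)"
    unfolding cell_image seg_def using False
    by (simp add: reflect_closed_segment closed_segment_commute)
  then show ?thesis using that by blast
qed

lemma index_cases:
  assumes "j < 4 * N" "j' < 4 * N"
  obtains "j = j'" | "(int j' - int j) mod (4 * int N) = 1" | "(int j - int j') mod (4 * int N) = 1"
    | "2 \<le> (int j - int j') mod (4 * int N)" "(int j - int j') mod (4 * int N) \<le> 4 * int N - 2"
proof -
  have mod_cases: "x mod (4 * int N) = x \<or> x mod (4 * int N) = x + 4 * int N"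
    if "- 4 * int N < x" "x < 4 * int N" for x
  proof (cases "0 \<le> x")
    case False
    have "(x + 4 * int N) mod (4 * int N) = x + 4 * int N"
      using that False by (intro mod_pos_pos_trivial) auto
    then show ?thesis by simp
  qed (use that in \<open>simp add: mod_pos_pos_trivial\<close>)
  have "(int j - int j') mod (4 * int N) = int j - int j'
        \<or> (int j - int j') mod (4 * int N) = int j - int j' + 4 * int N"
    "(int j' - int j) mod (4 * int N) = int j' - int j
        \<or> (int j' - int j) mod (4 * int N) = int j' - int j + 4 * int N"
    using assms by (intro mod_cases; linarith)+
  moreover have "0 \<le> (int j - int j') mod (4 * int N)" "(int j - int j') mod (4 * int N) < 4 * int N"
    "0 \<le> (int j' - int j) mod (4 * int N)" "(int j' - int j) mod (4 * int N) < 4 * int N"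
    using N_pos by simp_all
  ultimately show ?thesis using that by linarith
qed

lemma cells_disjoint_far:
  assumes "2 \<le> (int j - int j') mod (4 * int N)" "(int j - int j') mod (4 * int N) \<le> 4 * int N - 2"
    and "x \<in> F0 N" "y \<in> F0 N"
  shows "cell rotated j x \<noteq> cell rotated' j' y"
  using cell_eq_phi[OF assms(3)] cell_eq_phi[OF assms(4)] phi_disjoint_nonadjacent[OF assms(1,2)] by metis

lemma vC_succ_eqI:
  assumes "(int j' - int j) mod (4 * int N) = 1"
  shows "vC N (j' + k) = vC N (j + 1 + k)"
proof (rule vC_eqI)
  have "(int (j' + k) - int (j + 1 + k)) mod (4 * int N) = ((int j' - int j) - 1) mod (4 * int N)"
    by (simp add: algebra_simps)
  also have "\<dots> = ((int j' - int j) mod (4 * int N) - 1) mod (4 * int N)"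
    by (simp add: mod_diff_left_eq)
  finally show "(int (j' + k) - int (j + 1 + k)) mod (4 * int N) = 0"
    using assms by simp
qed

lemma adjacent_cells_meet:
  assumes adj: "(int j' - int j) mod (4 * int N) = 1"
    and x: "x \<in> F0 N" and y: "y \<in> F0 N" and eq: "cell rotated j x = cell rotated j' y"
  obtains \<alpha> \<beta> where "\<alpha> \<in> {N, 3 * N - 1}" "\<beta> \<in> {N, 3 * N - 1}" "x \<in> seg N \<alpha>" "y \<in> seg N \<beta>"
    "cell rotated j ` seg N \<alpha> = cell rotated j' ` seg N \<beta>"
proof -
  have phi': "phi N j' = phi N (j + 1)"
    unfolding phi_def[abs_def] using vC_succ_eqI[OF adj, of 0] by simp
  have seg': "seg N (j' + 3 * N - 1) = seg N (j + 3 * N)"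
    unfolding seg_def using vC_succ_eqI[OF adj, of "3 * N - 1"] vC_succ_eqI[OF adj, of "3 * N"] N_ge_2
    by (simp add: algebra_simps)
  obtain \<alpha> where \<alpha>: "\<alpha> \<in> {N, 3 * N - 1}" "cell rotated j ` seg N \<alpha> = phi N j ` seg N (j + N)"
    using cell_side_to_next .
  obtain \<beta> where \<beta>: "\<beta> \<in> {N, 3 * N - 1}" "cell rotated j' ` seg N \<beta> = phi N j' ` seg N (j' + 3 * N - 1)"
    using cell_side_to_prev .
  have same: "cell rotated j ` seg N \<alpha> = cell rotated j' ` seg N \<beta>"
    unfolding \<alpha>(2) \<beta>(2) phi' seg' phi_adjacent_common_side ..
  obtain x1 y1 where "x1 \<in> F0 N" "cell rotated j x = phi N j x1" "y1 \<in> F0 N" "cell rotated j' y = phi N (j + 1) y1"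
    using cell_eq_phi[OF x] cell_eq_phi[OF y] phi' by metis
  then have "x1 \<in> seg N (j + N)" using phi_adjacent_meet eq by metis
  then have mem: "cell rotated j x \<in> cell rotated j ` seg N \<alpha>"
    using \<alpha>(2) \<open>cell rotated j x = phi N j x1\<close> by simp
  then have "x \<in> seg N \<alpha>" using cell_inj_mem by blast
  moreover have "cell rotated j' y \<in> cell rotated j' ` seg N \<beta>" using mem same eq by simp
  then have "y \<in> seg N \<beta>" using cell_inj_mem by blast
  ultimately show ?thesis using that \<alpha>(1) \<beta>(1) same by blast
qed

end

section \<open>Marked sides of the cells\<close>

context regular_polygon
begin

text \<open>The edges of \<open>G\<^sub>0\<close> and \<open>D\<^sub>0\<close> end on the sides \<open>L\<^sub>0, L\<^sub>N, L\<^sub>3\<^sub>N\<^sub>-\<^sub>1\<close> of \<open>F\<^sub>0\<close>; their images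
  under the maps of a level are the marked sides of that level.\<close>

definition marked :: "nat set" where
  "marked = {0, N, 3 * N - 1}"

definition marked_sides :: "(complex \<Rightarrow> complex) set \<Rightarrow> complex set set" where
  "marked_sides C = {t ` seg N k | t k. t \<in> C \<and> k \<in> marked}"

definition sides_on :: "(complex \<Rightarrow> complex) set \<Rightarrow> nat \<Rightarrow> complex set set" where
  "sides_on C a = {S \<in> marked_sides C. S \<subseteq> seg N a}"

definition refine :: "(nat \<Rightarrow> bool) \<Rightarrow> (complex \<Rightarrow> complex) set \<Rightarrow> (complex \<Rightarrow> complex) set" where
  "refine rotated C = {cell rotated j \<circ> t | j t. j < 4 * N \<and> t \<in> C}"

abbreviation rotation :: "nat \<Rightarrow> complex \<Rightarrow> complex" where
  "rotation a \<equiv> (\<lambda>z. \<zeta> (2 * int a) * z)"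

definition maps_into_F0 :: "(complex \<Rightarrow> complex) set \<Rightarrow> bool" where
  "maps_into_F0 C \<longleftrightarrow> (\<forall>t\<in>C. plane_similarity t \<and> t ` F0 N \<subseteq> F0 N)"

definition sides_equal_or_disjoint :: "(complex \<Rightarrow> complex) set \<Rightarrow> bool" where
  "sides_equal_or_disjoint C \<longleftrightarrow>
     (\<forall>S\<in>marked_sides C. \<forall>S'\<in>marked_sides C. S \<inter> S' \<noteq> {} \<longrightarrow> S = S')"

definition sides_respect_boundary :: "(complex \<Rightarrow> complex) set \<Rightarrow> nat \<Rightarrow> bool" where
  "sides_respect_boundary C a \<longleftrightarrow> (\<forall>S\<in>marked_sides C. S \<inter> seg N a \<noteq> {} \<longrightarrow> S \<subseteq> seg N a)"

definition centres_off_sides :: "(complex \<Rightarrow> complex) set \<Rightarrow> bool" where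
  "centres_off_sides C \<longleftrightarrow> (\<forall>t\<in>C. \<forall>t'\<in>C. \<forall>k\<in>marked. t 0 \<notin> t' ` seg N k)"

definition centres_off_boundary :: "(complex \<Rightarrow> complex) set \<Rightarrow> nat \<Rightarrow> bool" where
  "centres_off_boundary C a \<longleftrightarrow> (\<forall>t\<in>C. t 0 \<notin> seg N a)"

text \<open>The last two conjuncts say that the marked sides on \<open>L\<^sub>a\<close> are rotated copies of those on
  \<open>L\<^sub>0\<close>, which are symmetric under conjugation. They let the marked sides of two adjacent cells
  on their common side be matched up.\<close>

definition admissible :: "(complex \<Rightarrow> complex) set \<Rightarrow> bool" where
  "admissible C \<longleftrightarrow> maps_into_F0 C \<and> sides_equal_or_disjoint C \<and> centres_off_sides C \<and>
     (\<forall>a\<in>marked. sides_respect_boundary C a \<and> centres_off_boundary C a) \<and>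
     (\<forall>a\<in>marked. sides_on C a = image (rotation a) ` sides_on C 0) \<and>
     image cnj ` sides_on C 0 = sides_on C 0"

lemma sides_equal_or_disjointD:
  "sides_equal_or_disjoint C \<Longrightarrow> S \<in> marked_sides C \<Longrightarrow> S' \<in> marked_sides C \<Longrightarrow> S \<inter> S' \<noteq> {} \<Longrightarrow> S = S'"
  unfolding sides_equal_or_disjoint_def by blast

lemma sides_respect_boundaryD:
  "sides_respect_boundary C a \<Longrightarrow> S \<in> marked_sides C \<Longrightarrow> S \<inter> seg N a \<noteq> {} \<Longrightarrow> S \<subseteq> seg N a"
  unfolding sides_respect_boundary_def by blast

lemma marked_simps: "0 \<in> marked" "N \<in> marked" "3 * N - 1 \<in> marked"
  unfolding marked_def by auto

lemma marked_sides_refine: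
  "marked_sides (refine rotated C) = {cell rotated j ` S | j S. j < 4 * N \<and> S \<in> marked_sides C}"
proof
  show "marked_sides (refine rotated C) \<subseteq> {cell rotated j ` S | j S. j < 4 * N \<and> S \<in> marked_sides C}"
  proof
    fix X assume "X \<in> marked_sides (refine rotated C)"
    then obtain j t k where "j < 4 * N" "t \<in> C" "k \<in> marked" "X = (cell rotated j \<circ> t) ` seg N k"
      unfolding marked_sides_def refine_def by blast
    then show "X \<in> {cell rotated j ` S | j S. j < 4 * N \<and> S \<in> marked_sides C}"
      unfolding marked_sides_def image_comp[symmetric] by blast
  qed
  show "{cell rotated j ` S | j S. j < 4 * N \<and> S \<in> marked_sides C} \<subseteq> marked_sides (refine rotated C)"
  proof clarify
    fix j S assume "j < 4 * N" "S \<in> marked_sides C"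
    then obtain t k where "t \<in> C" "k \<in> marked" "S = t ` seg N k" unfolding marked_sides_def by blast
    moreover have "cell rotated j \<circ> t \<in> refine rotated C"
      unfolding refine_def using \<open>j < 4 * N\<close> \<open>t \<in> C\<close> by blast
    ultimately have "cell rotated j ` S = (cell rotated j \<circ> t) ` seg N k"
      "cell rotated j \<circ> t \<in> refine rotated C" "k \<in> marked"
      by (auto simp: image_comp)
    then show "cell rotated j ` S \<in> marked_sides (refine rotated C)"
      unfolding marked_sides_def by blast
  qed
qed

lemma marked_sides_subset_F0: "maps_into_F0 C \<Longrightarrow> S \<in> marked_sides C \<Longrightarrow> S \<subseteq> F0 N"
  unfolding marked_sides_def maps_into_F0_def using seg_subset_F0 by blast

lemma marked_sides_nonempty: "S \<in> marked_sides C \<Longrightarrow> S \<noteq> {}"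
  unfolding marked_sides_def seg_def by auto

lemma zero_in_F0: "0 \<in> F0 N"
proof -
  have "vC N (2 * N) = \<zeta> (4 * int N) * vC N 0"
    unfolding vC_zeta zeta_add[symmetric] by (simp add: algebra_simps)
  then have "0 = (1 - 1/2) *\<^sub>R vC N 0 + (1/2) *\<^sub>R vC N (2 * N)"
    by (simp add: zeta_4N)
  then show ?thesis
    using convexD[OF convex_F0 vC_in_F0 vC_in_F0, of "1 - 1/2" "1/2" 0 "2 * N"] by simp
qed

lemma zero_notin_seg: "0 \<notin> seg N a"
  using normal_coord_seg[of 0 a] apothem_pos by (auto simp: normal_coord_def)

lemma maps_into_F0_refine: "maps_into_F0 C \<Longrightarrow> maps_into_F0 (refine rotated C)"
  unfolding maps_into_F0_def
proof
  fix s assume C: "\<forall>t\<in>C. plane_similarity t \<and> t ` F0 N \<subseteq> F0 N" and "s \<in> refine rotated C"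
  then obtain j t where s: "s = cell rotated j \<circ> t" and t: "t \<in> C" unfolding refine_def by blast
  have "plane_similarity s" unfolding s using C t cell_similarity plane_similarity_comp by blast
  moreover have "s ` F0 N \<subseteq> F0 N" unfolding s image_comp[symmetric] using C t cell_in_F0 by blast
  ultimately show "plane_similarity s \<and> s ` F0 N \<subseteq> F0 N" ..
qed

text \<open>\<open>covers_side rotated a\<close>: the boundary side \<open>L\<^sub>a\<close> is covered by the images of \<open>L\<^sub>0\<close>
  under the cells \<open>a\<close> (rotated) and \<open>a + 1\<close> (reflected).\<close>

definition covers_side :: "(nat \<Rightarrow> bool) \<Rightarrow> nat \<Rightarrow> bool" where
  "covers_side rotated a \<longleftrightarrow> a + 1 < 4 * N \<and> rotated a \<and> \<not> rotated (a + 1)"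

lemma cell_covering:
  assumes "covers_side rotated a"
  shows "cell rotated a x = rotation a (phi N 0 x)"
    and "cell rotated (a + 1) x = rotation a (phi N 1 (cnj x))"
proof -
  have "vC N a = rotation a (vC N 0)" "vC N (a + 1) = rotation a (vC N 1)"
    using rotate_vC_nat[of a 0] rotate_vC_nat[of a 1] by (simp_all add: add.commute)
  moreover have "\<zeta> (2 * int (a + 1) - 2) = \<zeta> (2 * int a)" by simp
  ultimately show "cell rotated a x = rotation a (phi N 0 x)"
    and "cell rotated (a + 1) x = rotation a (phi N 1 (cnj x))"
    using assms unfolding covers_side_def cell_def phi_eq by (simp_all add: algebra_simps)
qed

lemma covering_index:
  assumes "j < 4 * N" "a + 1 < 4 * N" "(int j - int a) mod (4 * int N) \<in> {0, 1}"
  shows "j = a \<or> j = a + 1"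
proof (cases "a \<le> j")
  case True
  then have "(int j - int a) mod (4 * int N) = int j - int a"
    using assms(1) by (intro mod_pos_pos_trivial) auto
  then show ?thesis using assms(3) by auto
next
  case False
  then have "(int j - int a + 4 * int N) mod (4 * int N) = int j - int a + 4 * int N"
    using assms(2) by (intro mod_pos_pos_trivial) auto
  then show ?thesis using assms(2,3) False by auto
qed

lemma cell_in_covered_side:
  assumes cov: "covers_side rotated a" and j: "j < 4 * N" and x: "x \<in> F0 N"
    and in_side: "cell rotated j x \<in> seg N a"
  shows "j = a \<or> j = a + 1" and "x \<in> seg N 0"
proof -
  obtain y where y: "y \<in> F0 N" "cell rotated j x = phi N j y" using cell_eq_phi[OF x] by blast
  have a: "a + 1 < 4 * N" using cov unfolding covers_side_def by simp
  have "phi N j y \<in> seg N a" using in_side y(2) by simp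
  then have "(int j - int a) mod (4 * int N) \<in> {0, 1}" by (rule phi_in_seg(2)[OF y(1)])
  then show ja: "j = a \<or> j = a + 1" by (rule covering_index[OF j a])
  have rot: "rotation a w \<in> seg N a \<longleftrightarrow> w \<in> seg N 0" for w
  proof -
    have "rotation a w \<in> rotation a ` seg N 0 \<longleftrightarrow> w \<in> seg N 0"
      by (rule inj_image_mem_iff[OF plane_similarity_inj[OF plane_similarity_mult]]) simp
    then show ?thesis using rotate_seg[of a 0] by simp
  qed
  have "rotation a (phi N 0 x) \<in> seg N a \<or> rotation a (phi N 1 (cnj x)) \<in> seg N a"
    using ja in_side cell_covering[OF cov, of x] by auto
  then have "phi N 0 x \<in> seg N 0 \<or> phi N 1 (cnj x) \<in> seg N 0"
    unfolding rot .
  then have "x \<in> seg N 0 \<or> cnj x \<in> seg N 0"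
    using phi_in_seg(1) x cnj_in_F0 by blast
  moreover have "x \<in> seg N 0" if "cnj x \<in> seg N 0"
  proof -
    have "cnj (cnj x) \<in> cnj ` seg N 0" using that by (rule imageI)
    then show ?thesis unfolding cnj_seg0 by simp
  qed
  ultimately show "x \<in> seg N 0" by blast
qed

lemma phi_seg0: "k \<in> {0, 1} \<Longrightarrow> w \<in> seg N 0 \<Longrightarrow> phi N k w \<in> seg N 0"
  using convexD[OF convex_closed_segment, of "vC N k" "vC N 0" "vC N 1" w "1 - r" r]
    ratio_pos ratio_less_1
  by (auto simp: seg_def phi_eq scaleR_conv_of_real algebra_simps)

lemma cell_seg0_in_covered_side:
  assumes "covers_side rotated a" "j = a \<or> j = a + 1" "w \<in> seg N 0"
  shows "cell rotated j w \<in> seg N a"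
proof -
  have "phi N 0 w \<in> seg N 0" "phi N 1 (cnj w) \<in> seg N 0"
    using phi_seg0 assms(3) cnj_seg0 by auto
  then show ?thesis
    using assms(2) cell_covering[OF assms(1)] rotate_seg[of a 0] by auto
qed

end

context regular_polygon
begin

lemma refineE:
  assumes "s \<in> refine rotated C"
  obtains j t where "s = cell rotated j \<circ> t" "j < 4 * N" "t \<in> C"
  using assms unfolding refine_def by blast

lemma marked_sides_refineE:
  assumes "X \<in> marked_sides (refine rotated C)"
  obtains j S where "X = cell rotated j ` S" "j < 4 * N" "S \<in> marked_sides C"
  using assms unfolding marked_sides_refine by blast

lemma centre_in_F0: "maps_into_F0 C \<Longrightarrow> t \<in> C \<Longrightarrow> t 0 \<in> F0 N"
  unfolding maps_into_F0_def using zero_in_F0 by blast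

lemma centres_off_boundary_refine:
  assumes C: "maps_into_F0 C" "centres_off_boundary C 0" and cov: "covers_side rotated a"
  shows "centres_off_boundary (refine rotated C) a"
  unfolding centres_off_boundary_def
proof (intro ballI notI)
  fix s assume "s \<in> refine rotated C" "s 0 \<in> seg N a"
  then obtain j t where "s = cell rotated j \<circ> t" "j < 4 * N" "t \<in> C" by (auto elim: refineE)
  then have "t 0 \<in> seg N 0"
    using cell_in_covered_side(2)[OF cov _ centre_in_F0[OF C(1)]] \<open>s 0 \<in> seg N a\<close> by auto
  then show False using C(2) \<open>t \<in> C\<close> unfolding centres_off_boundary_def by blast
qed

lemma sides_respect_boundary_refine:
  assumes C: "maps_into_F0 C" "sides_respect_boundary C 0" and cov: "covers_side rotated a"
  shows "sides_respect_boundary (refine rotated C) a"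
  unfolding sides_respect_boundary_def
proof (intro ballI impI)
  fix X assume "X \<in> marked_sides (refine rotated C)" "X \<inter> seg N a \<noteq> {}"
  then obtain j S x where X: "X = cell rotated j ` S" "j < 4 * N" "S \<in> marked_sides C"
    and x: "x \<in> S" "cell rotated j x \<in> seg N a"
    by (auto elim!: marked_sides_refineE)
  have "x \<in> F0 N" using marked_sides_subset_F0[OF C(1) X(3)] x(1) by blast
  then have j: "j = a \<or> j = a + 1" and "x \<in> seg N 0"
    using cell_in_covered_side[OF cov X(2) _ x(2)] by auto
  then have "S \<subseteq> seg N 0"
    using C(2) X(3) x(1) unfolding sides_respect_boundary_def by blast
  then show "X \<subseteq> seg N a" using cell_seg0_in_covered_side[OF cov j] X(1) by blast
qed

text \<open>The marked sides of the refined cells on \<open>L\<^sub>0\<close>, before the rotation to \<open>L\<^sub>a\<close>.\<close>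

definition next_pattern :: "(complex \<Rightarrow> complex) set \<Rightarrow> complex set set" where
  "next_pattern C = image (phi N 0) ` sides_on C 0 \<union> (\<lambda>S. phi N 1 ` cnj ` S) ` sides_on C 0"

lemma cell_covering_image:
  assumes "covers_side rotated a"
  shows "cell rotated a ` S = rotation a ` phi N 0 ` S"
    and "cell rotated (a + 1) ` S = rotation a ` phi N 1 ` cnj ` S"
  using cell_covering[OF assms] by (auto simp: image_image)

lemma sides_on_refineE:
  assumes C: "maps_into_F0 C" "sides_respect_boundary C 0" and cov: "covers_side rotated a"
    and X: "X \<in> sides_on (refine rotated C) a"
  obtains j S where "j = a \<or> j = a + 1" "S \<in> sides_on C 0" "X = cell rotated j ` S"
proof -
  obtain j S where S: "X = cell rotated j ` S" "j < 4 * N" "S \<in> marked_sides C"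
    using X unfolding sides_on_def by (auto elim: marked_sides_refineE)
  obtain x where x: "x \<in> S" using marked_sides_nonempty[OF S(3)] by blast
  have "x \<in> F0 N" using marked_sides_subset_F0[OF C(1) S(3)] x by blast
  then have j: "j = a \<or> j = a + 1" and "x \<in> seg N 0"
    using cell_in_covered_side[OF cov S(2)] X S(1) x unfolding sides_on_def by auto
  then have "S \<in> sides_on C 0"
    using sides_respect_boundaryD[OF C(2) S(3)] S(3) x unfolding sides_on_def by blast
  then show thesis using that j S(1) by blast
qed

lemma cell_image_in_sides_on_refine:
  assumes cov: "covers_side rotated a" and j: "j = a \<or> j = a + 1" and p: "p \<in> sides_on C 0"
  shows "cell rotated j ` p \<in> sides_on (refine rotated C) a"
proof -
  have "j < 4 * N" using j cov unfolding covers_side_def by auto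
  then have "cell rotated j ` p \<in> marked_sides (refine rotated C)"
    using p unfolding marked_sides_refine sides_on_def by blast
  moreover have "cell rotated j ` p \<subseteq> seg N a"
    using p cell_seg0_in_covered_side[OF cov j] unfolding sides_on_def by blast
  ultimately show ?thesis unfolding sides_on_def by blast
qed

lemma rotated_next_pattern_iff:
  assumes cov: "covers_side rotated a"
  shows "X \<in> image (rotation a) ` next_pattern C \<longleftrightarrow>
    (\<exists>j p. (j = a \<or> j = a + 1) \<and> p \<in> sides_on C 0 \<and> X = cell rotated j ` p)"
proof
  assume "X \<in> image (rotation a) ` next_pattern C"
  then obtain p where "p \<in> sides_on C 0"
    and "X = rotation a ` phi N 0 ` p \<or> X = rotation a ` phi N 1 ` cnj ` p"
    unfolding next_pattern_def by blast
  then show "\<exists>j p. (j = a \<or> j = a + 1) \<and> p \<in> sides_on C 0 \<and> X = cell rotated j ` p"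
    unfolding cell_covering_image[OF cov, symmetric] by blast
next
  assume "\<exists>j p. (j = a \<or> j = a + 1) \<and> p \<in> sides_on C 0 \<and> X = cell rotated j ` p"
  then obtain j p where j: "j = a \<or> j = a + 1" and p: "p \<in> sides_on C 0" and X: "X = cell rotated j ` p"
    by blast
  from j have "X = rotation a ` phi N 0 ` p \<or> X = rotation a ` phi N 1 ` cnj ` p"
  proof
    assume "j = a" then show ?thesis using X cell_covering_image(1)[OF cov] by simp
  next
    assume "j = a + 1" then show ?thesis using X cell_covering_image(2)[OF cov] by simp
  qed
  then show "X \<in> image (rotation a) ` next_pattern C" using p unfolding next_pattern_def by blast
qed

lemma sides_on_refine:
  assumes C: "maps_into_F0 C" "sides_respect_boundary C 0" and cov: "covers_side rotated a"
  shows "sides_on (refine rotated C) a = image (rotation a) ` next_pattern C"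
proof (intro equalityI subsetI)
  fix X assume "X \<in> sides_on (refine rotated C) a"
  then obtain j S where "j = a \<or> j = a + 1" "S \<in> sides_on C 0" "X = cell rotated j ` S"
    by (rule sides_on_refineE[OF C cov])
  then show "X \<in> image (rotation a) ` next_pattern C"
    unfolding rotated_next_pattern_iff[OF cov] by blast
next
  fix X assume "X \<in> image (rotation a) ` next_pattern C"
  then show "X \<in> sides_on (refine rotated C) a"
    unfolding rotated_next_pattern_iff[OF cov] using cell_image_in_sides_on_refine[OF cov] by blast
qed

lemma cnj_phi_0: "cnj (phi N 0 x) = phi N 1 (cnj x)"
  and cnj_phi_1: "cnj (phi N 1 x) = phi N 0 (cnj x)"
  unfolding phi_eq complex_cnj_add complex_cnj_mult complex_cnj_complex_of_real complex_cnj_diff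
    complex_cnj_one cnj_vC_0 cnj_vC_1 by (rule refl)+

lemma cnj_next_pattern: "image cnj ` next_pattern C = next_pattern C"
proof -
  have sub: "image cnj ` next_pattern C \<subseteq> next_pattern C"
  proof
    fix X assume "X \<in> image cnj ` next_pattern C"
    then obtain p where p: "p \<in> sides_on C 0"
      and "X = cnj ` phi N 0 ` p \<or> X = cnj ` phi N 1 ` cnj ` p"
      unfolding next_pattern_def by blast
    then have "X = phi N 1 ` cnj ` p \<or> X = phi N 0 ` p"
      by (auto simp only: image_image cnj_phi_0 cnj_phi_1 complex_cnj_cnj image_ident)
    then show "X \<in> next_pattern C" using p unfolding next_pattern_def by blast
  qed
  have "X \<in> image cnj ` next_pattern C" if "X \<in> next_pattern C" for X
  proof -
    have "cnj ` X \<in> next_pattern C" using sub that by blast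
    moreover have "X = cnj ` cnj ` X" by (simp add: image_image)
    ultimately show ?thesis by blast
  qed
  with sub show ?thesis by blast
qed

lemma match_pattern_on_seg0:
  assumes sym: "image cnj ` sides_on C 0 = sides_on C 0"
    and f: "plane_similarity f" and g: "plane_similarity g" and eq: "g ` seg N 0 = f ` seg N 0"
    and p: "p \<in> sides_on C 0"
  obtains q where "q \<in> sides_on C 0" "g ` p = f ` q"
proof -
  have p0: "p \<subseteq> seg N 0" using p unfolding sides_on_def by blast
  have "(\<forall>w\<in>seg N 0. g w = f w) \<or> (\<forall>w\<in>seg N 0. g w = f (vC N 0 + vC N 1 - w))"
    using plane_similarities_same_segment[OF g f, of "vC N 0" "vC N 1"] eq unfolding seg_def by simp
  then have "g ` p = f ` p \<or> g ` p = f ` cnj ` p"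
    using p0 cnj_on_seg0 by (auto simp: image_image intro!: image_cong)
  moreover have "cnj ` p \<in> sides_on C 0" using sym p by blast
  ultimately show thesis using that p by blast
qed

lemma boundary_side_from_pattern:
  assumes adm: "admissible C" and \<alpha>: "\<alpha> \<in> marked" and S: "S \<in> marked_sides C"
    and x: "x \<in> S" "x \<in> seg N \<alpha>"
  obtains p where "p \<in> sides_on C 0" "S = rotation \<alpha> ` p"
proof -
  have C: "sides_respect_boundary C \<alpha>" "sides_on C \<alpha> = image (rotation \<alpha>) ` sides_on C 0"
    using adm \<alpha> unfolding admissible_def by auto
  have "S \<inter> seg N \<alpha> \<noteq> {}" using x by blast
  then have "S \<subseteq> seg N \<alpha>" by (rule sides_respect_boundaryD[OF C(1) S])
  then have "S \<in> sides_on C \<alpha>" using S unfolding sides_on_def by blast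
  then have "S \<in> image (rotation \<alpha>) ` sides_on C 0" unfolding C(2) .
  then show thesis using that by blast
qed

lemma adjacent_marked_sides_match:
  assumes adm: "admissible C" and adj: "(int j' - int j) mod (4 * int N) = 1"
    and S: "S \<in> marked_sides C" and S': "S' \<in> marked_sides C" and x: "x \<in> S" and y: "y \<in> S'"
    and eq: "cell rotated j x = cell rotated j' y"
  shows "cell rotated j ` S = cell rotated j' ` S'"
proof -
  have C: "maps_into_F0 C" "sides_equal_or_disjoint C" "image cnj ` sides_on C 0 = sides_on C 0"
    using adm unfolding admissible_def by auto
  have F: "x \<in> F0 N" "y \<in> F0 N" using marked_sides_subset_F0[OF C(1)] S S' x y by blast+
  obtain \<alpha> \<beta> where "\<alpha> \<in> {N, 3 * N - 1}" "\<beta> \<in> {N, 3 * N - 1}" "x \<in> seg N \<alpha>" "y \<in> seg N \<beta>"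
    and same: "cell rotated j ` seg N \<alpha> = cell rotated j' ` seg N \<beta>"
    by (rule adjacent_cells_meet[OF adj F eq])
  then have \<alpha>\<beta>: "\<alpha> \<in> marked" "\<beta> \<in> marked" "x \<in> seg N \<alpha>" "y \<in> seg N \<beta>"
    unfolding marked_def by auto
  obtain p where p: "p \<in> sides_on C 0" "S = rotation \<alpha> ` p"
    using boundary_side_from_pattern[OF adm \<alpha>\<beta>(1) S x \<alpha>\<beta>(3)] .
  obtain p' where p': "p' \<in> sides_on C 0" "S' = rotation \<beta> ` p'"
    using boundary_side_from_pattern[OF adm \<alpha>\<beta>(2) S' y \<alpha>\<beta>(4)] .
  define f where "f = cell rotated j \<circ> rotation \<alpha>"
  define g where "g = cell rotated j' \<circ> rotation \<beta>"
  have sim: "plane_similarity f" "plane_similarity g"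
    unfolding f_def g_def by (simp_all add: plane_similarity_comp cell_similarity plane_similarity_mult)
  have "g ` seg N 0 = f ` seg N 0"
    unfolding f_def g_def image_comp[symmetric] using rotate_seg[of _ 0] same by simp
  then obtain q where q: "q \<in> sides_on C 0" "g ` p' = f ` q"
    using match_pattern_on_seg0[OF C(3) sim(1,2) _ p'(1)] by blast
  have "cell rotated j ` S = f ` p" "cell rotated j' ` S' = g ` p'"
    unfolding p(2) p'(2) f_def g_def by (simp_all add: image_comp)
  then have images: "cell rotated j ` S = f ` p" "cell rotated j' ` S' = f ` q"
    using q(2) by simp_all
  then have "cell rotated j x \<in> f ` p \<inter> f ` q" using x y eq by blast
  then have "f ` (p \<inter> q) \<noteq> {}" unfolding image_Int[OF plane_similarity_inj[OF sim(1)]] by blast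
  moreover have "p \<in> marked_sides C" "q \<in> marked_sides C" using p(1) q(1) unfolding sides_on_def by blast+
  ultimately have "p = q" using sides_equal_or_disjointD[OF C(2)] by blast
  then show ?thesis using images by simp
qed

lemma sides_equal_or_disjoint_refine:
  assumes adm: "admissible C"
  shows "sides_equal_or_disjoint (refine rotated C)"
  unfolding sides_equal_or_disjoint_def
proof (intro ballI impI)
  fix X X' assume "X \<in> marked_sides (refine rotated C)" "X' \<in> marked_sides (refine rotated C)"
    and "X \<inter> X' \<noteq> {}"
  obtain j S where S: "X = cell rotated j ` S" "j < 4 * N" "S \<in> marked_sides C"
    using \<open>X \<in> marked_sides (refine rotated C)\<close> by (rule marked_sides_refineE)
  obtain j' S' where S': "X' = cell rotated j' ` S'" "j' < 4 * N" "S' \<in> marked_sides C"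
    using \<open>X' \<in> marked_sides (refine rotated C)\<close> by (rule marked_sides_refineE)
  obtain x y where xy: "x \<in> S" "y \<in> S'" "cell rotated j x = cell rotated j' y"
    using \<open>X \<inter> X' \<noteq> {}\<close> S(1) S'(1) by blast
  have C: "maps_into_F0 C" "sides_equal_or_disjoint C" using adm unfolding admissible_def by auto
  have F: "x \<in> F0 N" "y \<in> F0 N" using marked_sides_subset_F0[OF C(1)] S(3) S'(3) xy by blast+
  from S(2) S'(2) show "X = X'"
  proof (cases rule: index_cases)
    case 1
    then have "x = y" using xy(3) plane_similarity_inj[OF cell_similarity] by (auto dest: injD)
    then show ?thesis
      using C(2) S S' xy 1 unfolding sides_equal_or_disjoint_def by blast
  next
    case 2
    show ?thesis using adjacent_marked_sides_match[OF adm 2 S(3) S'(3) xy] S(1) S'(1) by simp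
  next
    case 3
    show ?thesis
      using adjacent_marked_sides_match[OF adm 3 S'(3) S(3) xy(2,1) xy(3)[symmetric]] S(1) S'(1) by simp
  next
    case 4
    then show ?thesis using cells_disjoint_far F xy(3) by blast
  qed
qed

lemma centres_off_sides_refine:
  assumes adm: "admissible C"
  shows "centres_off_sides (refine rotated C)"
  unfolding centres_off_sides_def
proof (intro ballI notI)
  fix s s' k assume "s \<in> refine rotated C" "s' \<in> refine rotated C" "k \<in> marked"
    and on_side: "s 0 \<in> s' ` seg N k"
  then obtain j t j' t' where s: "s = cell rotated j \<circ> t" "j < 4 * N" "t \<in> C"
    and s': "s' = cell rotated j' \<circ> t'" "j' < 4 * N" "t' \<in> C"
    by (auto elim!: refineE)
  have C: "maps_into_F0 C" "centres_off_sides C" "\<And>a. a \<in> marked \<Longrightarrow> centres_off_boundary C a"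
    using adm unfolding admissible_def by auto
  obtain y where y: "y \<in> t' ` seg N k" "cell rotated j (t 0) = cell rotated j' y"
    using on_side s(1) s'(1) by auto
  have F: "t 0 \<in> F0 N" "y \<in> F0 N"
    using centre_in_F0[OF C(1) s(3)] y(1) C(1) s'(3) seg_subset_F0 unfolding maps_into_F0_def by blast+
  have off: "t 0 \<notin> seg N \<alpha>" if "\<alpha> \<in> {N, 3 * N - 1}" for \<alpha>
    using C(3)[of \<alpha>] that s(3) unfolding marked_def centres_off_boundary_def by blast
  from s(2) s'(2) show False
  proof (cases rule: index_cases)
    case 1
    then have "t 0 = y" using y(2) plane_similarity_inj[OF cell_similarity] by (auto dest: injD)
    then show False using C(2) s(3) s'(3) \<open>k \<in> marked\<close> y(1) unfolding centres_off_sides_def by blast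
  next
    case 2
    obtain \<alpha> \<beta> where "\<alpha> \<in> {N, 3 * N - 1}" "\<beta> \<in> {N, 3 * N - 1}" "t 0 \<in> seg N \<alpha>" "y \<in> seg N \<beta>"
      "cell rotated j ` seg N \<alpha> = cell rotated j' ` seg N \<beta>"
      by (rule adjacent_cells_meet[OF 2 F y(2)])
    then show False using off by blast
  next
    case 3
    obtain \<alpha> \<beta> where "\<alpha> \<in> {N, 3 * N - 1}" "\<beta> \<in> {N, 3 * N - 1}" "y \<in> seg N \<alpha>" "t 0 \<in> seg N \<beta>"
      "cell rotated j' ` seg N \<alpha> = cell rotated j ` seg N \<beta>"
      by (rule adjacent_cells_meet[OF 3 F(2,1) y(2)[symmetric]])
    then show False using off by blast
  next
    case 4
    then show False using cells_disjoint_far F y(2) by blast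
  qed
qed

end

context regular_polygon
begin

lemma marked_seg_disjoint:
  assumes "a \<in> marked" "b \<in> marked" "a \<noteq> b"
  shows "seg N a \<inter> seg N b = {}"
proof -
  have "seg N a \<inter> seg N b = {}" if "a \<in> marked" "b \<in> marked" "b < a" for a b
  proof (rule seg_disjoint)
    have "a \<le> 3 * N - 1" using that(1) unfolding marked_def by auto
    then have "(int a - int b) mod (4 * int N) = int a - int b"
      using that(3) by (intro mod_pos_pos_trivial) auto
    moreover have "int a - int b \<in> {int N, 3 * int N - 1, 2 * int N - 1}"
      using that N_ge_2 unfolding marked_def by (auto simp: of_nat_diff)
    ultimately show "(int a - int b) mod (4 * int N) \<notin> {0, 1, 4 * int N - 1}"
      using N_ge_2 by auto
  qed
  then show ?thesis using assms by (metis inf_commute linorder_neqE_nat)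
qed

lemma seg_nonempty: "seg N k \<noteq> {}"
  unfolding seg_def by auto

lemma marked_sides_id: "marked_sides {id} = seg N ` marked"
  unfolding marked_sides_def by auto

lemma sides_on_id: "a \<in> marked \<Longrightarrow> sides_on {id} a = {seg N a}"
  unfolding sides_on_def marked_sides_id using marked_seg_disjoint seg_nonempty by blast

lemma admissible_id: "admissible {id}"
proof -
  have "rotation a ` seg N 0 = seg N a" for a using rotate_seg[of a 0] by simp
  then have "sides_on {id} a = image (rotation a) ` sides_on {id} 0" if "a \<in> marked" for a
    using that marked_simps(1) by (simp add: sides_on_id)
  moreover have "image cnj ` sides_on {id} 0 = sides_on {id} 0"
    using marked_simps(1) by (simp add: sides_on_id cnj_seg0)
  moreover have "sides_respect_boundary {id} a" if "a \<in> marked" for a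
    unfolding sides_respect_boundary_def marked_sides_id using that marked_seg_disjoint by blast
  moreover have "sides_equal_or_disjoint {id}"
    unfolding sides_equal_or_disjoint_def marked_sides_id using marked_seg_disjoint by blast
  ultimately show ?thesis
    unfolding admissible_def maps_into_F0_def centres_off_sides_def centres_off_boundary_def
      marked_sides_id
    using plane_similarity_id zero_notin_seg by auto
qed

lemma admissible_refine:
  assumes adm: "admissible C" and cov: "\<And>a. a \<in> marked \<Longrightarrow> covers_side rotated a"
  shows "admissible (refine rotated C)"
proof -
  have C: "maps_into_F0 C" "sides_respect_boundary C 0" "centres_off_boundary C 0"
    using adm marked_simps(1) unfolding admissible_def by auto
  have "sides_on (refine rotated C) 0 = next_pattern C"
    using sides_on_refine[OF C(1,2) cov[OF marked_simps(1)]] by simp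
  then show ?thesis
    unfolding admissible_def
    using maps_into_F0_refine[OF C(1)] sides_equal_or_disjoint_refine[OF adm]
      centres_off_sides_refine[OF adm] sides_respect_boundary_refine[OF C(1,2) cov]
      centres_off_boundary_refine[OF C(1,3) cov] sides_on_refine[OF C(1,2) cov] cnj_next_pattern
    by simp
qed

lemma covers_side_tilde: "a \<in> marked \<Longrightarrow> covers_side tilde_rotated a"
  unfolding covers_side_def tilde_rotated_def marked_def using N_ge_2
  by (auto simp: even_diff_nat)

lemma covers_side_even: "even a \<Longrightarrow> a + 1 < 4 * N \<Longrightarrow> covers_side even a"
  unfolding covers_side_def by simp

lemma refine_words:
  assumes "\<And>j w. f (j # w) = cell rotated j \<circ> g w"
  shows "f ` words N (Suc m) = refine rotated (g ` words N m)"
proof -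
  have words: "words N (Suc m) = {j # w | j w. j < 4 * N \<and> w \<in> words N m}"
    unfolding words_def Lam_def by (auto simp: length_Suc_conv)
  show ?thesis
  proof
    show "f ` words N (Suc m) \<subseteq> refine rotated (g ` words N m)"
      unfolding words refine_def using assms by blast
    show "refine rotated (g ` words N m) \<subseteq> f ` words N (Suc m)"
    proof
      fix s assume "s \<in> refine rotated (g ` words N m)"
      then obtain j w where "s = cell rotated j \<circ> g w" "j < 4 * N" "w \<in> words N m"
        unfolding refine_def by blast
      then have "s = f (j # w)" "j # w \<in> words N (Suc m)" unfolding words using assms by auto
      then show "s \<in> f ` words N (Suc m)" by blast
    qed
  qed
qed

lemma psitw_cells: "psitw N ` words N m = (refine tilde_rotated ^^ m) {id}"
proof (induction m)
  case 0
  have "words N 0 = {[]}" unfolding words_def by auto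
  then show ?case by simp
next
  case (Suc m)
  have "psitw N ` words N (Suc m) = refine tilde_rotated (psitw N ` words N m)"
    by (rule refine_words) (simp add: psit_cell)
  then show ?case using Suc by simp
qed

lemma psiw_cells: "psiw N ` words N (Suc m) = refine even (psitw N ` words N m)"
  by (rule refine_words) (simp add: psi_cell)

lemma admissible_psitw: "admissible (psitw N ` words N m)"
  unfolding psitw_cells
proof (induction m)
  case 0
  show ?case unfolding funpow_0 by (rule admissible_id)
next
  case (Suc m)
  then show ?case unfolding funpow.simps comp_apply by (rule admissible_refine[OF _ covers_side_tilde])
qed

lemma psiw_cells_facts:
  assumes "1 \<le> m"
  defines "C \<equiv> psiw N ` words N m"
  shows "maps_into_F0 C" "sides_equal_or_disjoint C" "centres_off_sides C"
    and "even a \<Longrightarrow> a + 1 < 4 * N \<Longrightarrow> sides_respect_boundary C a"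
proof -
  obtain m' where m: "m = Suc m'" using assms by (cases m) auto
  let ?C' = "psitw N ` words N m'"
  have C: "C = refine even ?C'" unfolding C_def m psiw_cells ..
  have adm: "admissible ?C'" by (rule admissible_psitw)
  then have C': "maps_into_F0 ?C'" "sides_respect_boundary ?C' 0"
    using marked_simps(1) unfolding admissible_def by auto
  show "maps_into_F0 C" unfolding C by (rule maps_into_F0_refine[OF C'(1)])
  show "sides_equal_or_disjoint C" unfolding C by (rule sides_equal_or_disjoint_refine[OF adm])
  show "centres_off_sides C" unfolding C by (rule centres_off_sides_refine[OF adm])
  show "even a \<Longrightarrow> a + 1 < 4 * N \<Longrightarrow> sides_respect_boundary C a"
    unfolding C by (rule sides_respect_boundary_refine[OF C' covers_side_even])
qed

end

context regular_polygon
begin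

lemma zeta_odd_vertexE:
  assumes "\<zeta> (2 * d - 1) = v"
  obtains j where "j \<in> Lam N" "v = vC N j"
  using zeta_odd_in_vertices[of d] assms by blast

lemma Phi_rotate:
  assumes "\<And>x. x \<in> A \<Longrightarrow> \<zeta> (2 * a) * x \<in> A" and "z \<in> Phi N A"
  shows "\<zeta> (2 * a) * z \<in> Phi N A"
proof -
  obtain j x where jx: "j \<in> Lam N" "x \<in> A" "z = phi N j x" using assms(2) unfolding Phi_def by blast
  obtain j' where j': "j' \<in> Lam N" "\<zeta> (2 * a) * vC N j = vC N j'"
    by (rule zeta_odd_vertexE[OF rotate_vC[symmetric]])
  have "\<zeta> (2 * a) * z = of_real r * (\<zeta> (2 * a) * x) + (1 - of_real r) * (\<zeta> (2 * a) * vC N j)"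
    unfolding jx(3) phi_eq by (simp add: algebra_simps)
  also have "\<dots> = phi N j' (\<zeta> (2 * a) * x)"
    unfolding phi_eq j'(2) ..
  finally show ?thesis using assms(1) jx(2) j'(1) unfolding Phi_def by blast
qed

lemma Phi_cnj:
  assumes "\<And>x. x \<in> A \<Longrightarrow> cnj x \<in> A" and "z \<in> Phi N A"
  shows "cnj z \<in> Phi N A"
proof -
  obtain j x where jx: "j \<in> Lam N" "x \<in> A" "z = phi N j x" using assms(2) unfolding Phi_def by blast
  obtain j' where j': "j' \<in> Lam N" "cnj (vC N j) = vC N j'"
    by (rule zeta_odd_vertexE[OF cnj_vC[symmetric]])
  have "cnj z = phi N j' (cnj x)"
    unfolding jx(3) phi_eq j'(2)[symmetric] by simp
  then show ?thesis using assms(1) jx(2) j'(1) unfolding Phi_def by blast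
qed

lemma Fm_Suc: "Fm N (Suc m) = Phi N (Fm N m)"
  unfolding Fm_def by simp

lemma Fm_rotate_cnj: "x \<in> Fm N m \<Longrightarrow> \<zeta> (2 * a) * x \<in> Fm N m \<and> cnj x \<in> Fm N m"
proof (induction m arbitrary: x a)
  case 0
  then show ?case unfolding Fm_def using rotate_in_F0 cnj_in_F0 by simp
next
  case (Suc m)
  have "\<And>y. y \<in> Fm N m \<Longrightarrow> \<zeta> (2 * a) * y \<in> Fm N m" "\<And>y. y \<in> Fm N m \<Longrightarrow> cnj y \<in> Fm N m"
    using Suc.IH by blast+
  then show ?case
    using Phi_rotate Phi_cnj Suc.prems unfolding Fm_Suc by metis
qed

lemma cell_in_Fm:
  assumes "j < 4 * N" "x \<in> Fm N m"
  shows "cell rotated j x \<in> Fm N (Suc m)"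
proof -
  have "cnj x \<in> Fm N m" using Fm_rotate_cnj[OF assms(2)] by blast
  then have "\<zeta> (2 * (int j - 1)) * cnj x \<in> Fm N m" using Fm_rotate_cnj by blast
  moreover have "\<zeta> (2 * int j) * x \<in> Fm N m" using Fm_rotate_cnj[OF assms(2)] by blast
  ultimately have "(if rotated j then \<zeta> (2 * int j) * x else \<zeta> (2 * int j - 2) * cnj x) \<in> Fm N m"
    by (simp add: algebra_simps)
  moreover have "cell rotated j x = phi N j (if rotated j then \<zeta> (2 * int j) * x else \<zeta> (2 * int j - 2) * cnj x)"
    unfolding cell_def by simp
  moreover have "j \<in> Lam N" using assms(1) unfolding Lam_def by simp
  ultimately show ?thesis unfolding Fm_Suc Phi_def by blast
qed

lemma psitw_in_Fm: "set w \<subseteq> Lam N \<Longrightarrow> x \<in> F0 N \<Longrightarrow> psitw N w x \<in> Fm N (length w)"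
proof (induction w)
  case Nil
  then show ?case unfolding Fm_def by simp
next
  case (Cons j w)
  then show ?case using cell_in_Fm unfolding Lam_def by (simp add: psit_cell)
qed

lemma psiw_in_Fm:
  assumes "w \<in> words N m" "x \<in> F0 N"
  shows "psiw N w x \<in> Fm N m"
proof (cases w)
  case Nil
  then show ?thesis using assms unfolding words_def Fm_def by auto
next
  case (Cons j v)
  then have "set v \<subseteq> Lam N" "j < 4 * N" "m = Suc (length v)"
    using assms(1) unfolding words_def Lam_def by auto
  then show ?thesis using psitw_in_Fm[OF _ assms(2)] cell_in_Fm Cons by (simp add: psi_cell)
qed

end

section \<open>The graphs \<open>G\<^sub>m\<close> and \<open>D\<^sub>m\<close>\<close>

lemma midpoint_complex: "midpoint a b = (a + b) / (2 :: complex)"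
  by (simp add: midpoint_def scaleR_conv_of_real field_simps)

lemma midpoint_doubleton_eq: "{a, b} = {c, d} \<Longrightarrow> midpoint a b = midpoint c d"
  by (metis doubleton_eq_iff midpoint_sym)

lemma energy_sum: "energy E u = (\<Sum>d\<in>E. (u (fst d) - u (snd d))\<^sup>2)"
  unfolding energy_def by (simp add: case_prod_beta)

lemma energy_nonneg: "0 \<le> energy E u"
  unfolding energy_sum by (intro sum_nonneg) simp

lemma star_edges:
  "Em N ((\<lambda>j. (0, f j)) ` J) m = {(psiw N w 0, psiw N w (f j)) | w j. w \<in> words N m \<and> j \<in> J}"
proof
  show "Em N ((\<lambda>j. (0, f j)) ` J) m \<subseteq> {(psiw N w 0, psiw N w (f j)) | w j. w \<in> words N m \<and> j \<in> J}"
  proof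
    fix d assume "d \<in> Em N ((\<lambda>j. (0, f j)) ` J) m"
    then obtain w j where "w \<in> words N m" "j \<in> J" "d = (psiw N w 0, psiw N w (f j))"
      unfolding Em_def by auto
    then show "d \<in> {(psiw N w 0, psiw N w (f j)) | w j. w \<in> words N m \<and> j \<in> J}" by blast
  qed
  show "{(psiw N w 0, psiw N w (f j)) | w j. w \<in> words N m \<and> j \<in> J} \<subseteq> Em N ((\<lambda>j. (0, f j)) ` J) m"
  proof clarify
    fix w j assume "w \<in> words N m" "j \<in> J"
    then have "(w, (0, f j)) \<in> words N m \<times> (\<lambda>j. (0, f j)) ` J" by blast
    then show "(psiw N w 0, psiw N w (f j)) \<in> Em N ((\<lambda>j. (0, f j)) ` J) m"
      unfolding Em_def by (rule rev_image_eqI) simp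
  qed
qed

lemma star_vertices:
  "Vm N (insert 0 (f ` J)) m = (\<lambda>w. psiw N w 0) ` words N m \<union> {psiw N w (f j) | w j. w \<in> words N m \<and> j \<in> J}"
  unfolding Vm_def by blast

locale level = regular_polygon +
  fixes m :: nat
  assumes m_ge_1: "1 \<le> m"
begin

abbreviation W :: "nat list set" where
  "W \<equiv> words N m"

definition endpoints :: "nat list \<Rightarrow> nat \<Rightarrow> complex set" where
  "endpoints w k = {psiw N w (vC N k), psiw N w (vC N (k + 1))}"

definition side_midpoint :: "nat list \<Rightarrow> nat \<Rightarrow> complex" where
  "side_midpoint w k = psiw N w (midpoint (vC N k) (vC N (k + 1)))"

definition centres :: "complex set" where
  "centres = (\<lambda>w. psiw N w 0) ` W"

text \<open>Since marked sides are equal or disjoint, a vertex of \<open>D\<^sub>m\<close> that is no centre is an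
  endpoint of a unique marked side, and a vertex of \<open>G\<^sub>m\<close> that is no centre is the
  midpoint of a unique marked side.\<close>

definition mid_of :: "complex \<Rightarrow> complex" where
  "mid_of x = (THE M. \<exists>w\<in>W. \<exists>k\<in>marked. x \<in> endpoints w k \<and> M = side_midpoint w k)"

definition ends_of :: "complex \<Rightarrow> complex set" where
  "ends_of M = (THE E. \<exists>w\<in>W. \<exists>k\<in>marked. M = side_midpoint w k \<and> E = endpoints w k)"

lemma psiw_similarity: "w \<in> W \<Longrightarrow> plane_similarity (psiw N w)"
  using psiw_cells_facts(1)[OF m_ge_1] unfolding maps_into_F0_def by blast

lemma psiw_side: "w \<in> W \<Longrightarrow> psiw N w ` seg N k = closed_segment (psiw N w (vC N k)) (psiw N w (vC N (k + 1)))"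
  unfolding seg_def by (rule plane_similarity_closed_segment[OF psiw_similarity])

lemma endpoints_in_side: "w \<in> W \<Longrightarrow> x \<in> endpoints w k \<Longrightarrow> x \<in> psiw N w ` seg N k"
  unfolding endpoints_def psiw_side by auto

lemma side_midpoint_in_side: "w \<in> W \<Longrightarrow> side_midpoint w k \<in> psiw N w ` seg N k"
  unfolding side_midpoint_def seg_def by simp

lemma endpoints_distinct: "w \<in> W \<Longrightarrow> psiw N w (vC N k) \<noteq> psiw N w (vC N (k + 1))"
  using vC_neq_succ[of k] by (simp add: inj_eq[OF plane_similarity_inj[OF psiw_similarity]])

lemma card_endpoints: "w \<in> W \<Longrightarrow> card (endpoints w k) = 2"
  unfolding endpoints_def using endpoints_distinct by simp

lemma marked_sidesI: "t \<in> C \<Longrightarrow> k \<in> marked \<Longrightarrow> t ` seg N k \<in> marked_sides C"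
  unfolding marked_sides_def by blast

lemma meeting_marked_sides:
  assumes w: "w \<in> W" "w' \<in> W" and k: "k \<in> marked" "k' \<in> marked"
    and meet: "psiw N w ` seg N k \<inter> psiw N w' ` seg N k' \<noteq> {}"
  shows "endpoints w k = endpoints w' k'" and "side_midpoint w k = side_midpoint w' k'"
proof -
  have sides: "psiw N w ` seg N k \<in> marked_sides (psiw N ` W)"
    "psiw N w' ` seg N k' \<in> marked_sides (psiw N ` W)"
    using w k by (simp_all add: marked_sidesI)
  have "psiw N w ` seg N k = psiw N w' ` seg N k'"
    by (rule sides_equal_or_disjointD[OF psiw_cells_facts(2)[OF m_ge_1] sides meet])
  then show ends: "endpoints w k = endpoints w' k'"
    unfolding psiw_side[OF w(1)] psiw_side[OF w(2)] endpoints_def closed_segment_eq .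
  show "side_midpoint w k = side_midpoint w' k'"
    using midpoint_doubleton_eq[OF ends[unfolded endpoints_def]]
    unfolding side_midpoint_def plane_similarity_midpoint[OF psiw_similarity[OF w(1)]]
      plane_similarity_midpoint[OF psiw_similarity[OF w(2)]] .
qed

lemma mid_of_eq:
  assumes "w \<in> W" "k \<in> marked" "x \<in> endpoints w k"
  shows "mid_of x = side_midpoint w k"
  unfolding mid_of_def
proof (rule the_equality)
  show "\<exists>w'\<in>W. \<exists>k'\<in>marked. x \<in> endpoints w' k' \<and> side_midpoint w k = side_midpoint w' k'"
    using assms by blast
next
  fix M assume "\<exists>w'\<in>W. \<exists>k'\<in>marked. x \<in> endpoints w' k' \<and> M = side_midpoint w' k'"
  then obtain w' k' where w': "w' \<in> W" "k' \<in> marked" "x \<in> endpoints w' k'" "M = side_midpoint w' k'"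
    by blast
  have "psiw N w ` seg N k \<inter> psiw N w' ` seg N k' \<noteq> {}"
    using endpoints_in_side[OF assms(1,3)] endpoints_in_side[OF w'(1,3)] by blast
  then show "M = side_midpoint w k"
    using meeting_marked_sides(2)[OF assms(1) w'(1) assms(2) w'(2)] w'(4) by simp
qed

lemma ends_of_eq:
  assumes "w \<in> W" "k \<in> marked"
  shows "ends_of (side_midpoint w k) = endpoints w k"
  unfolding ends_of_def
proof (rule the_equality)
  show "\<exists>w'\<in>W. \<exists>k'\<in>marked. side_midpoint w k = side_midpoint w' k' \<and> endpoints w k = endpoints w' k'"
    using assms by blast
next
  fix E assume "\<exists>w'\<in>W. \<exists>k'\<in>marked. side_midpoint w k = side_midpoint w' k' \<and> E = endpoints w' k'"
  then obtain w' k' where w': "w' \<in> W" "k' \<in> marked" "side_midpoint w k = side_midpoint w' k'"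
    "E = endpoints w' k'"
    by blast
  have "psiw N w ` seg N k \<inter> psiw N w' ` seg N k' \<noteq> {}"
    using side_midpoint_in_side[OF assms(1), of k] side_midpoint_in_side[OF w'(1), of k'] w'(3) by auto
  then show "E = endpoints w k"
    using meeting_marked_sides(1)[OF assms(1) w'(1) assms(2) w'(2)] w'(4) by simp
qed

lemma centre_off_marked_side: "w \<in> W \<Longrightarrow> w' \<in> W \<Longrightarrow> k \<in> marked \<Longrightarrow> psiw N w 0 \<notin> psiw N w' ` seg N k"
  using psiw_cells_facts(3)[OF m_ge_1] unfolding centres_off_sides_def by blast

lemma on_marked_side_not_centre:
  assumes "w \<in> W" "k \<in> marked" "x \<in> psiw N w ` seg N k"
  shows "x \<notin> centres"
proof
  assume "x \<in> centres"
  then obtain w' where "w' \<in> W" "x = psiw N w' 0" unfolding centres_def by blast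
  then show False using centre_off_marked_side[OF _ assms(1,2)] assms(3) by blast
qed

end

context level
begin

abbreviation EG :: "(complex \<times> complex) set" where "EG \<equiv> Em N (EG0 N) m"
abbreviation ED :: "(complex \<times> complex) set" where "ED \<equiv> Em N (ED0 N) m"
abbreviation VG :: "complex set" where "VG \<equiv> Vm N (VG0 N) m"
abbreviation VD :: "complex set" where "VD \<equiv> Vm N (VD0 N) m"

lemma endpoints_iff: "x \<in> endpoints w k \<longleftrightarrow> x = psiw N w (vC N k) \<or> x = psiw N w (vC N (Suc k))"
  unfolding endpoints_def by auto

lemma endpoint_indices: "{0, 1, N, N + 1, 3 * N - 1, 3 * N} = marked \<union> Suc ` marked"
  unfolding marked_def using N_ge_2 by auto

lemma EG_eq: "EG = {(psiw N w 0, side_midpoint w k) | w k. w \<in> W \<and> k \<in> marked}"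
  unfolding EG0_def star_edges side_midpoint_def midpoint_complex marked_def ..

lemma ED_eq: "ED = {(psiw N w 0, x) | w k x. w \<in> W \<and> k \<in> marked \<and> x \<in> endpoints w k}"
  unfolding ED0_def endpoint_indices star_edges endpoints_iff by blast

lemma VG_eq: "VG = centres \<union> {side_midpoint w k | w k. w \<in> W \<and> k \<in> marked}"
  unfolding VG0_def star_vertices side_midpoint_def midpoint_complex marked_def centres_def ..

lemma VD_eq: "VD = centres \<union> {x | w k x. w \<in> W \<and> k \<in> marked \<and> x \<in> endpoints w k}"
  unfolding VD0_def endpoint_indices star_vertices endpoints_iff centres_def by blast

lemma finite_W: "finite W"
proof -
  have "W = {xs. set xs \<subseteq> Lam N \<and> length xs = m}" unfolding words_def by auto
  then show ?thesis using finite_lists_length_eq[of "Lam N" m] unfolding Lam_def by simp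
qed

lemma finite_EG: "finite EG" and finite_ED: "finite ED"
  unfolding Em_def EG0_def ED0_def using finite_W by simp_all

lemma EG_edgeE:
  assumes "e \<in> EG"
  obtains w k where "w \<in> W" "k \<in> marked" "e = (psiw N w 0, side_midpoint w k)"
  using assms unfolding EG_eq by blast

lemma ED_edgeE:
  assumes "d \<in> ED"
  obtains w k where "w \<in> W" "k \<in> marked" "snd d \<in> endpoints w k" "fst d = psiw N w 0"
  using assms unfolding ED_eq by auto

lemma ED_fibre:
  assumes "e \<in> EG"
  shows "{d \<in> ED. (fst d, mid_of (snd d)) = e} = (\<lambda>x. (fst e, x)) ` ends_of (snd e)"
proof -
  obtain w k where wk: "w \<in> W" "k \<in> marked" "e = (psiw N w 0, side_midpoint w k)"
    using assms by (rule EG_edgeE)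
  show ?thesis
  proof
    show "{d \<in> ED. (fst d, mid_of (snd d)) = e} \<subseteq> (\<lambda>x. (fst e, x)) ` ends_of (snd e)"
    proof
      fix d assume d: "d \<in> {d \<in> ED. (fst d, mid_of (snd d)) = e}"
      then obtain w' k' where w': "w' \<in> W" "k' \<in> marked" "snd d \<in> endpoints w' k'"
        by (auto elim: ED_edgeE)
      have img: "fst d = fst e" "mid_of (snd d) = snd e" using d by auto
      then have "side_midpoint w' k' = side_midpoint w k" using mid_of_eq[OF w'] wk(3) by simp
      then have "snd d \<in> ends_of (snd e)" using ends_of_eq[OF w'(1,2)] w'(3) wk(3) by simp
      then show "d \<in> (\<lambda>x. (fst e, x)) ` ends_of (snd e)"
        using img(1) by (metis (no_types, lifting) image_eqI prod.collapse)
    qed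
    show "(\<lambda>x. (fst e, x)) ` ends_of (snd e) \<subseteq> {d \<in> ED. (fst d, mid_of (snd d)) = e}"
    proof
      fix d assume "d \<in> (\<lambda>x. (fst e, x)) ` ends_of (snd e)"
      then obtain x where d: "d = (fst e, x)" and "x \<in> ends_of (snd e)" by blast
      then have x: "x \<in> endpoints w k" using ends_of_eq[OF wk(1,2)] wk(3) by simp
      then have "(psiw N w 0, x) \<in> ED" unfolding ED_eq using wk by blast
      then show "d \<in> {d \<in> ED. (fst d, mid_of (snd d)) = e}"
        using mid_of_eq[OF wk(1,2) x] wk(3) d by simp
    qed
  qed
qed

lemma sum_ED: "(\<Sum>d\<in>ED. H d) = (\<Sum>e\<in>EG. \<Sum>x\<in>ends_of (snd e). H (fst e, x))"
proof -
  have img: "(\<lambda>d. (fst d, mid_of (snd d))) ` ED \<subseteq> EG"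
  proof clarify
    fix c x assume "(c, x) \<in> ED"
    then obtain w k where wk: "w \<in> W" "k \<in> marked" "x \<in> endpoints w k" "c = psiw N w 0"
      by (auto elim: ED_edgeE)
    then show "(fst (c, x), mid_of (snd (c, x))) \<in> EG"
      unfolding EG_eq using mid_of_eq[OF wk(1-3)] by auto
  qed
  have "(\<Sum>d\<in>ED. H d) = (\<Sum>e\<in>EG. \<Sum>d\<in>{d \<in> ED. (fst d, mid_of (snd d)) = e}. H d)"
    using sum.group[OF finite_ED finite_EG img, of H] by simp
  also have "\<dots> = (\<Sum>e\<in>EG. \<Sum>x\<in>ends_of (snd e). H (fst e, x))"
    by (intro sum.cong refl) (simp add: ED_fibre sum.reindex inj_on_def)
  finally show ?thesis .
qed

definition feasible :: "complex set \<Rightarrow> (complex \<Rightarrow> real) \<Rightarrow> bool" where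
  "feasible V u \<longleftrightarrow> (\<forall>x\<in>V \<inter> Aset N m. u x = 0) \<and> (\<forall>x\<in>V \<inter> Bset N m. u x = 1)"

lemma marked_side_on_boundary:
  assumes "w \<in> W" "k \<in> marked" "even a" "a + 1 < 4 * N"
    and "z \<in> psiw N w ` seg N k" "z \<in> seg N a"
  shows "psiw N w ` seg N k \<subseteq> Fm N m \<inter> seg N a"
proof -
  have "psiw N w ` seg N k \<in> marked_sides (psiw N ` W)" using assms(1,2) by (simp add: marked_sidesI)
  moreover have "psiw N w ` seg N k \<inter> seg N a \<noteq> {}" using assms(5,6) by blast
  ultimately have "psiw N w ` seg N k \<subseteq> seg N a"
    by (rule sides_respect_boundaryD[OF psiw_cells_facts(4)[OF m_ge_1 assms(3,4)]])
  moreover have "psiw N w ` seg N k \<subseteq> Fm N m" using psiw_in_Fm[OF assms(1)] seg_subset_F0 by blast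
  ultimately show ?thesis by blast
qed

lemma marked_side_in_Aset:
  assumes "w \<in> W" "k \<in> marked" "z \<in> psiw N w ` seg N k" "z \<in> Aset N m"
  shows "psiw N w ` seg N k \<subseteq> Aset N m"
proof -
  obtain i where i: "i < N" "z \<in> seg N (4 * i)" using assms(4) unfolding Aset_def by blast
  have "psiw N w ` seg N k \<subseteq> Fm N m \<inter> seg N (4 * i)"
    by (rule marked_side_on_boundary[OF assms(1,2) _ _ assms(3) i(2)]) (use i(1) in auto)
  then show ?thesis unfolding Aset_def using i(1) by blast
qed

lemma marked_side_in_Bset:
  assumes "w \<in> W" "k \<in> marked" "z \<in> psiw N w ` seg N k" "z \<in> Bset N m"
  shows "psiw N w ` seg N k \<subseteq> Bset N m"
proof -
  obtain i where i: "i < N" "z \<in> seg N (4 * i + 2)" using assms(4) unfolding Bset_def by blast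
  have "psiw N w ` seg N k \<subseteq> Fm N m \<inter> seg N (4 * i + 2)"
    by (rule marked_side_on_boundary[OF assms(1,2) _ _ assms(3) i(2)]) (use i(1) in auto)
  then show ?thesis unfolding Bset_def using i(1) by blast
qed

end

context level
begin

definition to_D :: "(complex \<Rightarrow> real) \<Rightarrow> complex \<Rightarrow> real" where
  "to_D u z = (if z \<in> centres then u z else u (mid_of z))"

definition to_G :: "(complex \<Rightarrow> real) \<Rightarrow> complex \<Rightarrow> real" where
  "to_G v z = (if z \<in> centres then v z else (\<Sum>x\<in>ends_of z. v x) / 2)"

lemma centre_vertex: "centres \<subseteq> VG" "centres \<subseteq> VD"
  unfolding VG_eq VD_eq by blast+

lemma feasible_to_D:
  assumes u: "feasible VG u"
  shows "feasible VD (to_D u)"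
  unfolding feasible_def
proof (intro conjI ballI)
  fix x assume x: "x \<in> VD \<inter> Aset N m"
  show "to_D u x = 0"
  proof (cases "x \<in> centres")
    case True then show ?thesis using u x centre_vertex unfolding feasible_def to_D_def by auto
  next
    case False
    then obtain w k where wk: "w \<in> W" "k \<in> marked" "x \<in> endpoints w k" using x unfolding VD_eq by blast
    then have "side_midpoint w k \<in> Aset N m"
      using marked_side_in_Aset[OF wk(1,2) endpoints_in_side[OF wk(1,3)]] x side_midpoint_in_side by blast
    moreover have "side_midpoint w k \<in> VG" unfolding VG_eq using wk by blast
    ultimately show ?thesis using u False mid_of_eq[OF wk] unfolding feasible_def to_D_def by simp
  qed
next
  fix x assume x: "x \<in> VD \<inter> Bset N m"
  show "to_D u x = 1"
  proof (cases "x \<in> centres")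
    case True then show ?thesis using u x centre_vertex unfolding feasible_def to_D_def by auto
  next
    case False
    then obtain w k where wk: "w \<in> W" "k \<in> marked" "x \<in> endpoints w k" using x unfolding VD_eq by blast
    then have "side_midpoint w k \<in> Bset N m"
      using marked_side_in_Bset[OF wk(1,2) endpoints_in_side[OF wk(1,3)]] x side_midpoint_in_side by blast
    moreover have "side_midpoint w k \<in> VG" unfolding VG_eq using wk by blast
    ultimately show ?thesis using u False mid_of_eq[OF wk] unfolding feasible_def to_D_def by simp
  qed
qed

lemma energy_to_D: "energy ED (to_D u) = 2 * energy EG u"
proof -
  have "(\<Sum>x\<in>ends_of (snd e). (to_D u (fst e) - to_D u x)\<^sup>2) = 2 * (u (fst e) - u (snd e))\<^sup>2"
    if e: "e \<in> EG" for e
  proof -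
    obtain w k where wk: "w \<in> W" "k \<in> marked" "e = (psiw N w 0, side_midpoint w k)"
      using e by (rule EG_edgeE)
    have "to_D u (fst e) = u (fst e)" using wk unfolding to_D_def centres_def by auto
    moreover have "to_D u x = u (snd e)" if "x \<in> endpoints w k" for x
      using that wk on_marked_side_not_centre[OF wk(1,2) endpoints_in_side[OF wk(1)]] mid_of_eq[OF wk(1,2)]
      unfolding to_D_def by simp
    ultimately show ?thesis
      using ends_of_eq[OF wk(1,2)] card_endpoints[OF wk(1)] wk(3) by simp
  qed
  then show ?thesis
    unfolding energy_sum sum_ED[of "\<lambda>d. (to_D u (fst d) - to_D u (snd d))\<^sup>2"]
    by (simp add: sum_distrib_left)
qed

lemma feasible_to_G:
  assumes v: "feasible VD v"
  shows "feasible VG (to_G v)"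
  unfolding feasible_def
proof (intro conjI ballI)
  fix z assume z: "z \<in> VG \<inter> Aset N m"
  show "to_G v z = 0"
  proof (cases "z \<in> centres")
    case True then show ?thesis using v z centre_vertex unfolding feasible_def to_G_def by auto
  next
    case False
    then obtain w k where wk: "w \<in> W" "k \<in> marked" "z = side_midpoint w k" using z unfolding VG_eq by blast
    then have "psiw N w ` seg N k \<subseteq> Aset N m"
      using marked_side_in_Aset[OF wk(1,2) side_midpoint_in_side[OF wk(1)]] z by simp
    then have "v x = 0" if "x \<in> endpoints w k" for x
      using v that wk endpoints_in_side[OF wk(1) that] unfolding feasible_def VD_eq by blast
    then show ?thesis using False ends_of_eq[OF wk(1,2)] wk(3) unfolding to_G_def by simp
  qed
next
  fix z assume z: "z \<in> VG \<inter> Bset N m"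
  show "to_G v z = 1"
  proof (cases "z \<in> centres")
    case True then show ?thesis using v z centre_vertex unfolding feasible_def to_G_def by auto
  next
    case False
    then obtain w k where wk: "w \<in> W" "k \<in> marked" "z = side_midpoint w k" using z unfolding VG_eq by blast
    then have "psiw N w ` seg N k \<subseteq> Bset N m"
      using marked_side_in_Bset[OF wk(1,2) side_midpoint_in_side[OF wk(1)]] z by simp
    then have "v x = 1" if "x \<in> endpoints w k" for x
      using v that wk endpoints_in_side[OF wk(1) that] unfolding feasible_def VD_eq by blast
    then have "(\<Sum>x\<in>endpoints w k. v x) = 2" using card_endpoints[OF wk(1)] by simp
    then show ?thesis using False ends_of_eq[OF wk(1,2)] wk(3) unfolding to_G_def by simp
  qed
qed

lemma energy_to_G: "2 * energy EG (to_G v) \<le> energy ED v"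
proof -
  have "2 * (to_G v (fst e) - to_G v (snd e))\<^sup>2 \<le> (\<Sum>x\<in>ends_of (snd e). (v (fst e) - v x)\<^sup>2)"
    if e: "e \<in> EG" for e
  proof -
    obtain w k where wk: "w \<in> W" "k \<in> marked" "e = (psiw N w 0, side_midpoint w k)"
      using e by (rule EG_edgeE)
    have "ends_of (snd e) = {psiw N w (vC N k), psiw N w (vC N (k + 1))}"
      using ends_of_eq[OF wk(1,2)] wk(3) unfolding endpoints_def by simp
    moreover have "to_G v (fst e) = v (fst e)" using wk unfolding to_G_def centres_def by auto
    moreover have "snd e \<notin> centres"
      using on_marked_side_not_centre[OF wk(1,2) side_midpoint_in_side[OF wk(1)]] wk(3) by simp
    ultimately show ?thesis
      using endpoints_distinct[OF wk(1)] two_sq_dist_midpoint_le unfolding to_G_def by simp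
  qed
  then have "2 * energy EG (to_G v) \<le> (\<Sum>e\<in>EG. \<Sum>x\<in>ends_of (snd e). (v (fst e) - v x)\<^sup>2)"
    unfolding energy_sum sum_distrib_left by (rule sum_mono)
  then show ?thesis
    unfolding energy_sum sum_ED[of "\<lambda>d. (v (fst d) - v (snd d))\<^sup>2"] by simp
qed

lemma boundary_segments_disjoint:
  assumes "i < N" "i' < N"
  shows "seg N (4 * i) \<inter> seg N (4 * i' + 2) = {}"
proof (rule seg_disjoint)
  have "(int (4 * i) - int (4 * i' + 2)) mod (4 * int N) mod 4 = (int (4 * i) - int (4 * i' + 2)) mod 4"
    by (rule mod_mod_cancel) simp
  also have "\<dots> = 2" by simp presburger
  finally have "(int (4 * i) - int (4 * i' + 2)) mod (4 * int N) mod 4 = 2" .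
  moreover have "(4 * int N - 1) mod 4 = 3" by presburger
  ultimately show "(int (4 * i) - int (4 * i' + 2)) mod (4 * int N) \<notin> {0, 1, 4 * int N - 1}"
    by auto
qed

lemma feasible_exists: "\<exists>u. feasible V u"
proof
  define B where "B = (\<Union>i<N. seg N (4 * i + 2))"
  have "x \<notin> B" if x: "x \<in> Aset N m" for x
  proof -
    obtain i where "i < N" "x \<in> seg N (4 * i)" using x unfolding Aset_def by blast
    then show ?thesis using boundary_segments_disjoint[OF \<open>i < N\<close>] unfolding B_def by blast
  qed
  moreover have "x \<in> B" if "x \<in> Bset N m" for x
    using that unfolding Bset_def B_def by blast
  ultimately show "feasible V (indicator B)"
    unfolding feasible_def by simp
qed

lemma Inf_energy_D: "Inf {energy ED v | v. feasible VD v} = 2 * Inf {energy EG u | u. feasible VG u}"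
proof (rule cInf_eq_scaled)
  show "{energy EG u | u. feasible VG u} \<noteq> {}" "{energy ED v | v. feasible VD v} \<noteq> {}"
    using feasible_exists by blast+
  show "bdd_below {energy EG u | u. feasible VG u}" "bdd_below {energy ED v | v. feasible VD v}"
    using energy_nonneg by (auto intro: bdd_belowI[of _ 0])
  show "\<exists>b\<in>{energy ED v | v. feasible VD v}. b \<le> 2 * a" if "a \<in> {energy EG u | u. feasible VG u}" for a
    using that feasible_to_D energy_to_D by fastforce
  show "\<exists>a\<in>{energy EG u | u. feasible VG u}. 2 * a \<le> b" if "b \<in> {energy ED v | v. feasible VD v}" for b
    using that feasible_to_G energy_to_G by fastforce
qed simp

theorem resistance_G_eq_twice_D: "RG N m = 2 * RD N m"
  using Inf_energy_D unfolding RG_def RD_def eff_res_def feasible_def by simp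

end

theorem lemma3p5:
  fixes N m :: nat
  assumes "N \<ge> 2" and "m \<ge> 1"
  shows "RG N m = 2 * RD N m"
proof -
  interpret level N m using assms by unfold_locales
  show ?thesis by (rule resistance_G_eq_twice_D)
qed

end
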